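(* Let $U\neq0$, $2\le k<\lfloor L/2\rfloor$, and let $F_k$ be a $k$-local conserved quantity of the one-dimensional Hubbard model. For $\sigma,\mu\in\{\uparrow,\downarrow\}$ and $s\in\{+,-\}$, let $q_i^{\sigma,s;\mu,-s}$ denote the $k$-support basis element starting at site $i$ whose only non-identity factors are $e_{i,\sigma}=c^{s}_{i,\sigma}$ and $e_{i+k-1,\mu}=c^{-s}_{i+k-1,\mu}$, where $c^+=c^\dagger$, $c^-=c$. Then the coefficient of $q_i^{\sigma,s;\mu,-s}$ in $F_k$ does not depend on $i$.
   Context: Fermionic operators $c_{j,\sigma},c^\dagger_{j,\sigma}$, $j\in\{1,\dots,L\}$ with indices modulo $L$ (periodic boundary conditions), $\sigma\in\{\uparrow,\downarrow\}$, with canonical anticommutation relations; $n_{j,\sigma}=c^\dagger_{j,\sigma}c_{j,\sigma}$, $z_{j,\sigma}=2n_{j,\sigma}-1$. Hubbard Hamiltonian: $H=-2\sum_j\sum_\sigma(c^\dagger_{j,\sigma}c_{j+1,\sigma}+c^\dagger_{j+1,\sigma}c_{j,\sigma})+4U\sum_j(n_{j,\uparrow}-\tfrac12)(n_{j,\downarrow}-\tfrac12)$. An $l$-support basis element starting at site $i$ is $(e_{i,\uparrow}\cdots e_{i+l-1,\uparrow})(e_{i,\downarrow}\cdots e_{i+l-1,\downarrow})$ (in exactly this operator order) with $e_{j,\sigma}\in\{c_{j,\sigma},c^\dagger_{j,\sigma},z_{j,\sigma},I\}$, $(e_{i,\uparrow},e_{i,\downarrow})\neq(I,I)$, $(e_{i+l-1,\uparrow},e_{i+l-1,\downarrow})\neq(I,I)$.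 A $k$-local conserved quantity is $F_k=\sum_{l=1}^k\sum_{i=1}^L\sum_e c_e\,e$ (inner sum over $l$-support basis elements starting at $i$) with $[F_k,H]=0$ and some nonzero coefficient on a $k$-support basis element. *)

theory Defs
  imports Complex_Main
begin

text \<open>Fermionic Fock space of the L-site Hubbard chain with 2L modes.
Basis states are occupation sets S \<subseteq> {0..<2L}; operators are matrices
indexed by such sets (entries outside the Fock space are zero).
Annihilation/creation operators are given by the Jordan-Wigner construction.\<close>

datatype spin = Up | Dn

type_synonym op = "nat set \<Rightarrow> nat set \<Rightarrow> complex"

definition modes :: "nat \<Rightarrow> nat set" where
  "modes L = {0..<2*L}"

definition mode :: "nat \<Rightarrow> nat \<Rightarrow> spin \<Rightarrow> nat" where
  "mode L j s = 2 * (j mod L) + (if s = Up then 0 else 1)"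

definition jw_sign :: "nat set \<Rightarrow> nat \<Rightarrow> complex" where
  "jw_sign S m = (-1) ^ card {m' \<in> S. m' < m}"

definition op_id :: "nat \<Rightarrow> op" where
  "op_id L x y = (if x \<subseteq> modes L \<and> y \<subseteq> modes L \<and> x = y then 1 else 0)"

definition op_zero :: op where "op_zero x y = 0"

definition op_add :: "op \<Rightarrow> op \<Rightarrow> op" where
  "op_add A B x y = A x y + B x y"

definition op_smult :: "complex \<Rightarrow> op \<Rightarrow> op" where
  "op_smult a A x y = a * A x y"

definition op_mult :: "nat \<Rightarrow> op \<Rightarrow> op \<Rightarrow> op" where
  "op_mult L A B x y = (\<Sum>z\<in>Pow (modes L). A x z * B z y)"

definition op_sum :: "('i \<Rightarrow> op) \<Rightarrow> 'i set \<Rightarrow> op" where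
  "op_sum f I x y = (\<Sum>i\<in>I. f i x y)"

definition op_prod :: "nat \<Rightarrow> op list \<Rightarrow> op" where
  "op_prod L As = foldr (op_mult L) As (op_id L)"

definition cann :: "nat \<Rightarrow> nat \<Rightarrow> spin \<Rightarrow> op" where
  "cann L j s x y = (let m = mode L j s in
     if x \<subseteq> modes L \<and> y \<subseteq> modes L \<and> m \<in> y \<and> x = y - {m} then jw_sign y m else 0)"

definition ccre :: "nat \<Rightarrow> nat \<Rightarrow> spin \<Rightarrow> op" where
  "ccre L j s x y = (let m = mode L j s in
     if x \<subseteq> modes L \<and> y \<subseteq> modes L \<and> m \<notin> y \<and> x = insert m y then jw_sign y m else 0)"

definition num :: "nat \<Rightarrow> nat \<Rightarrow> spin \<Rightarrow> op" where
  "num L j s = op_mult L (ccre L j s) (cann L j s)"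

definition zop :: "nat \<Rightarrow> nat \<Rightarrow> spin \<Rightarrow> op" where
  "zop L j s = op_add (op_smult 2 (num L j s)) (op_smult (-1) (op_id L))"

definition hubbard :: "nat \<Rightarrow> real \<Rightarrow> op" where
  "hubbard L U = op_add
     (op_smult (-2) (op_sum (\<lambda>(j, s). op_add (op_mult L (ccre L j s) (cann L (j+1) s))
                                              (op_mult L (ccre L (j+1) s) (cann L j s)))
                     ({1..L} \<times> UNIV)))
     (op_smult (4 * complex_of_real U)
        (op_sum (\<lambda>j. op_mult L (op_add (num L j Up) (op_smult (-1/2) (op_id L)))
                                 (op_add (num L j Dn) (op_smult (-1/2) (op_id L)))) {1..L}))"

datatype fop = FC | FCd | FZ | FI

definition fop_op :: "nat \<Rightarrow> fop \<Rightarrow> nat \<Rightarrow> spin \<Rightarrow> op" where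
  "fop_op L f j s = (case f of FC \<Rightarrow> cann L j s | FCd \<Rightarrow> ccre L j s | FZ \<Rightarrow> zop L j s | FI \<Rightarrow> op_id L)"

text \<open>A label \<epsilon> t s gives the factor at site i+t, spin s (t = 0..l-1).
Valid l-support labels: identity beyond offset l-1, non-identity pair at both ends.\<close>
definition valid_label :: "nat \<Rightarrow> (nat \<Rightarrow> spin \<Rightarrow> fop) \<Rightarrow> bool" where
  "valid_label l \<epsilon> \<longleftrightarrow> (\<forall>t\<ge>l. \<forall>s. \<epsilon> t s = FI)
      \<and> (\<epsilon> 0 Up \<noteq> FI \<or> \<epsilon> 0 Dn \<noteq> FI)
      \<and> (\<epsilon> (l-1) Up \<noteq> FI \<or> \<epsilon> (l-1) Dn \<noteq> FI)"

definition basis_elem :: "nat \<Rightarrow> nat \<Rightarrow> nat \<Rightarrow> (nat \<Rightarrow> spin \<Rightarrow> fop) \<Rightarrow> op" where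
  "basis_elem L l i \<epsilon> = op_prod L
     (map (\<lambda>t. fop_op L (\<epsilon> t Up) (i+t) Up) [0..<l] @
      map (\<lambda>t. fop_op L (\<epsilon> t Dn) (i+t) Dn) [0..<l])"

definition local_op :: "nat \<Rightarrow> nat \<Rightarrow> (nat \<Rightarrow> nat \<Rightarrow> (nat \<Rightarrow> spin \<Rightarrow> fop) \<Rightarrow> complex) \<Rightarrow> op" where
  "local_op L k coef = op_sum (\<lambda>(l, i, \<epsilon>). op_smult (coef l i \<epsilon>) (basis_elem L l i \<epsilon>))
     {(l, i, \<epsilon>). l \<in> {1..k} \<and> i \<in> {1..L} \<and> valid_label l \<epsilon>}"

definition is_conserved_local :: "nat \<Rightarrow> real \<Rightarrow> nat \<Rightarrow> (nat \<Rightarrow> nat \<Rightarrow> (nat \<Rightarrow> spin \<Rightarrow> fop) \<Rightarrow> complex) \<Rightarrow> bool" where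
  "is_conserved_local L U k coef \<longleftrightarrow>
     op_mult L (local_op L k coef) (hubbard L U) = op_mult L (hubbard L U) (local_op L k coef)
     \<and> (\<exists>i\<in>{1..L}. \<exists>\<epsilon>. valid_label k \<epsilon> \<and> coef k i \<epsilon> \<noteq> 0)"

text \<open>Label of q_i^{\<sigma>,s;\<mu>,-s}: c^s at (offset 0, \<sigma>), c^{-s} at (offset k-1, \<mu>).
The sign s is encoded as a bool: True = + (creation), False = - (annihilation).\<close>
definition cs :: "bool \<Rightarrow> fop" where "cs b = (if b then FCd else FC)"

definition q_label :: "nat \<Rightarrow> spin \<Rightarrow> bool \<Rightarrow> spin \<Rightarrow> nat \<Rightarrow> spin \<Rightarrow> fop" where
  "q_label k \<sigma> b \<mu> t s =
     (if t = 0 \<and> s = \<sigma> then cs b else if t = k - 1 \<and> s = \<mu> then cs (\<not> b) else FI)"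

end

theory Submission
  imports Defs
begin

text \<open>Operators are matrices indexed by occupation sets, and every product of factors
  \<open>c, c\<^sup>\<dagger>, z, I\<close> maps each basis state to a multiple of a single basis state. Fix \<open>i\<close>, put
  \<open>A = (i, \<sigma>)\<close>, \<open>B = (i + k, \<mu>)\<close>, and take the matrix element of \<open>[F\<^sub>k, H] = 0\<close> between
  \<open>dst \<union> \<eta>\<close> and \<open>src \<union> \<eta>\<close>, where \<open>{src, dst} = {A, B}\<close> and \<open>\<eta>\<close> is an occupation of the
  other modes of the window \<open>[i, i + k]\<close>; weight it by the sign of the hop \<open>src \<rightarrow> dst\<close> and
  sum over \<open>\<eta>\<close>. A term of \<open>F\<^sub>k\<close> has support at most \<open>k\<close>, so it cannot move a particle
  between \<open>A\<close> and \<open>B\<close> by itself; the (off-diagonal, hopping) part of \<open>H\<close> must supply the hop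
  \<open>A \<leftrightarrow> (i + 1, \<sigma>)\<close> or \<open>B \<leftrightarrow> (i + k - 1, \<mu>)\<close>, and the terms of \<open>F\<^sub>k\<close> completing it are the
  elements \<open>q\<close> at \<open>i\<close> resp. \<open>i + 1\<close> with some identities replaced by \<open>z\<close>. Every such \<open>z\<close>
  averages out over \<open>\<eta>\<close>, so the sum is a nonzero multiple of the difference of the
  coefficients of \<open>q\<close> at \<open>i\<close> and \<open>i + 1\<close>. The interaction term is diagonal and drops out.\<close>

lemma jw_sign_square: "jw_sign S m * jw_sign S m = 1"
  unfolding jw_sign_def by (simp flip: power_add)

lemma jw_sign_insert: "u \<notin> S \<Longrightarrow> jw_sign (insert u S) m = (if u < m then -1 else 1) * jw_sign S m"
proof -
  assume u: "u \<notin> S"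
  have fin: "finite {m' \<in> S. m' < m}" by (rule finite_subset[of _ "{..<m}"]) auto
  show ?thesis
  proof (cases "u < m")
    case True
    have "{m' \<in> insert u S. m' < m} = insert u {m' \<in> S. m' < m}" using True by auto
    then show ?thesis using True u fin by (simp add: jw_sign_def)
  next
    case False
    have "{m' \<in> insert u S. m' < m} = {m' \<in> S. m' < m}" using False by auto
    then show ?thesis using False by (simp add: jw_sign_def)
  qed
qed

lemma jw_sign_insert_self: "jw_sign (insert m S) m = jw_sign S m"
proof -
  have "{m' \<in> insert m S. m' < m} = {m' \<in> S. m' < m}" by auto
  then show ?thesis by (simp add: jw_sign_def)
qed

lemma jw_sign_remove_self: "jw_sign (S - {m}) m = jw_sign S m"
proof -
  have "{m' \<in> S - {m}. m' < m} = {m' \<in> S. m' < m}" by auto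
  then show ?thesis by (simp add: jw_sign_def)
qed

lemma finite_modes[simp]: "finite (modes L)" by (simp add: modes_def)

definition mono_op :: "nat \<Rightarrow> (nat set \<Rightarrow> nat set) \<Rightarrow> (nat set \<Rightarrow> complex) \<Rightarrow> op" where
  "mono_op L g w x y = (if y \<subseteq> modes L \<and> x = g y then w y else 0)"

lemma mono_op_mult:
  assumes "\<And>y. y \<subseteq> modes L \<Longrightarrow> g2 y \<subseteq> modes L"
  shows "op_mult L (mono_op L g1 w1) (mono_op L g2 w2) = mono_op L (g1 \<circ> g2) (\<lambda>y. w1 (g2 y) * w2 y)"
proof (intro ext)
  fix x y
  show "op_mult L (mono_op L g1 w1) (mono_op L g2 w2) x y = mono_op L (g1 \<circ> g2) (\<lambda>y. w1 (g2 y) * w2 y) x y"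
  proof (cases "y \<subseteq> modes L")
    case False thus ?thesis by (simp add: op_mult_def mono_op_def)
  next
    case True
    have "op_mult L (mono_op L g1 w1) (mono_op L g2 w2) x y
        = (\<Sum>z\<in>Pow (modes L). if z = g2 y then mono_op L g1 w1 x z * w2 y else 0)"
      unfolding op_mult_def by (intro sum.cong) (auto simp: mono_op_def True)
    also have "\<dots> = mono_op L g1 w1 x (g2 y) * w2 y" using assms True by simp
    finally show ?thesis using assms True by (simp add: mono_op_def)
  qed
qed

lemma mono_op_add: "op_add (mono_op L g w1) (mono_op L g w2) = mono_op L g (\<lambda>y. w1 y + w2 y)"
  by (intro ext) (simp add: op_add_def mono_op_def)

lemma mono_op_smult: "op_smult c (mono_op L g w) = mono_op L g (\<lambda>y. c * w y)"
  by (intro ext) (simp add: op_smult_def mono_op_def)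

lemma mono_op_cong: "(\<And>y. y \<subseteq> modes L \<Longrightarrow> w y = w' y) \<Longrightarrow>
   (\<And>y. y \<subseteq> modes L \<Longrightarrow> w y \<noteq> 0 \<Longrightarrow> g y = g' y) \<Longrightarrow> mono_op L g w = mono_op L g' w'"
  by (intro ext) (auto simp: mono_op_def)

lemma op_id_mono_op: "op_id L = mono_op L id (\<lambda>_. 1)"
  by (intro ext) (auto simp: op_id_def mono_op_def)

definition factor_map :: "fop \<Rightarrow> nat \<Rightarrow> nat set \<Rightarrow> nat set" where
  "factor_map f m y = (case f of FC \<Rightarrow> y - {m} | FCd \<Rightarrow> insert m y | _ \<Rightarrow> y)"

definition factor_weight :: "fop \<Rightarrow> nat \<Rightarrow> nat set \<Rightarrow> complex" where
  "factor_weight f m y = (case f of FC \<Rightarrow> if m \<in> y then jw_sign y m else 0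
     | FCd \<Rightarrow> if m \<notin> y then jw_sign y m else 0
     | FZ \<Rightarrow> if m \<in> y then 1 else -1 | FI \<Rightarrow> 1)"

lemma mode_in: "0 < L \<Longrightarrow> mode L j s \<in> modes L"
proof -
  assume "0 < L"
  then have "j mod L < L" by simp
  then show ?thesis by (simp add: mode_def modes_def)
qed

lemma cann_mono_op: "cann L j s = mono_op L (factor_map FC (mode L j s)) (factor_weight FC (mode L j s))"
  by (intro ext) (auto simp: cann_def mono_op_def factor_map_def factor_weight_def Let_def)

lemma ccre_mono_op: "0 < L \<Longrightarrow> ccre L j s = mono_op L (factor_map FCd (mode L j s)) (factor_weight FCd (mode L j s))"
  by (intro ext) (auto simp: ccre_def mono_op_def factor_map_def factor_weight_def Let_def dest: mode_in)

lemma num_mono_op: "0 < L \<Longrightarrow> num L j s = mono_op L id (\<lambda>y. if mode L j s \<in> y then 1 else 0)"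
proof -
  assume L: "0 < L"
  define m where "m = mode L j s"
  have "num L j s = mono_op L (factor_map FCd m \<circ> factor_map FC m) (\<lambda>y. factor_weight FCd m (factor_map FC m y) * factor_weight FC m y)"
    unfolding num_def m_def using L by (simp add: ccre_mono_op cann_mono_op, intro mono_op_mult) (auto simp: factor_map_def)
  also have "\<dots> = mono_op L id (\<lambda>y. if m \<in> y then 1 else 0)"
    by (rule mono_op_cong) (auto simp: factor_map_def factor_weight_def jw_sign_remove_self jw_sign_square split: if_splits)
  finally show ?thesis by (simp add: m_def)
qed

lemma zop_mono_op: "0 < L \<Longrightarrow> zop L j s = mono_op L id (\<lambda>y. if mode L j s \<in> y then 1 else -1)"
  by (simp add: zop_def num_mono_op op_id_mono_op mono_op_smult mono_op_add) (rule mono_op_cong, auto)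

lemma factor_map_diagonal[simp]: "factor_map FZ m = (\<lambda>y. y)" "factor_map FI m = (\<lambda>y. y)"
  by (rule ext, simp add: factor_map_def)+

lemma factor_weight_diagonal[simp]: "factor_weight FZ m = (\<lambda>y. if m \<in> y then 1 else -1)" "factor_weight FI m = (\<lambda>y. 1)"
  by (rule ext, simp add: factor_weight_def)+

lemma fop_op_mono_op: "0 < L \<Longrightarrow> fop_op L f j s = mono_op L (factor_map f (mode L j s)) (factor_weight f (mode L j s))"
  by (cases f) (simp_all add: fop_op_def cann_mono_op ccre_mono_op zop_mono_op op_id_mono_op factor_map_def factor_weight_def id_def)

primrec string_map :: "(fop \<times> nat) list \<Rightarrow> nat set \<Rightarrow> nat set" where
  "string_map [] y = y"
| "string_map (e # r) y = factor_map (fst e) (snd e) (string_map r y)"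

primrec string_weight :: "(fop \<times> nat) list \<Rightarrow> nat set \<Rightarrow> complex" where
  "string_weight [] y = 1"
| "string_weight (e # r) y = factor_weight (fst e) (snd e) (string_map r y) * string_weight r y"

lemma string_Cons: "string_map (e # r) = (\<lambda>y. factor_map (fst e) (snd e) (string_map r y))"
   "string_weight (e # r) = (\<lambda>y. factor_weight (fst e) (snd e) (string_map r y) * string_weight r y)"
  by (rule ext, simp)+

lemma string_map_closed: "(\<forall>e\<in>set fl. snd e \<in> modes L) \<Longrightarrow> y \<subseteq> modes L \<Longrightarrow> string_map fl y \<subseteq> modes L"
  by (induction fl) (auto simp: factor_map_def split: fop.splits)

lemma op_prod_mono_op: "(\<forall>e\<in>set fl. snd e \<in> modes L) \<Longrightarrow>
  op_prod L (map (\<lambda>e. mono_op L (factor_map (fst e) (snd e)) (factor_weight (fst e) (snd e))) fl) = mono_op L (string_map fl) (string_weight fl)"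
proof (induction fl)
  case Nil thus ?case by (simp add: op_prod_def op_id_mono_op id_def)
next
  case (Cons e r)
  have "op_prod L (map (\<lambda>e. mono_op L (factor_map (fst e) (snd e)) (factor_weight (fst e) (snd e))) (e # r))
     = op_mult L (mono_op L (factor_map (fst e) (snd e)) (factor_weight (fst e) (snd e))) (mono_op L (string_map r) (string_weight r))"
    using Cons by (simp add: op_prod_def)
  also have "\<dots> = mono_op L (string_map (e # r)) (string_weight (e # r))"
    using Cons by (subst mono_op_mult) (auto intro: string_map_closed[THEN subsetD] simp: o_def string_Cons)
  finally show ?case .
qed

definition factor_list :: "nat \<Rightarrow> nat \<Rightarrow> nat \<Rightarrow> (nat \<Rightarrow> spin \<Rightarrow> fop) \<Rightarrow> (fop \<times> nat) list" where
  "factor_list L l i \<epsilon> = map (\<lambda>t. (\<epsilon> t Up, mode L (i+t) Up)) [0..<l] @ map (\<lambda>t. (\<epsilon> t Dn, mode L (i+t) Dn)) [0..<l]"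

lemma basis_elem_mono_op: "0 < L \<Longrightarrow> basis_elem L l i \<epsilon> = mono_op L (string_map (factor_list L l i \<epsilon>)) (string_weight (factor_list L l i \<epsilon>))"
proof -
  assume L: "0 < L"
  have "basis_elem L l i \<epsilon> = op_prod L (map (\<lambda>e. mono_op L (factor_map (fst e) (snd e)) (factor_weight (fst e) (snd e))) (factor_list L l i \<epsilon>))"
    unfolding basis_elem_def factor_list_def using L by (simp add: fop_op_mono_op o_def)
  also have "\<dots> = mono_op L (string_map (factor_list L l i \<epsilon>)) (string_weight (factor_list L l i \<epsilon>))"
    using L by (intro op_prod_mono_op) (auto simp: factor_list_def mode_in)
  finally show ?thesis .
qed

lemma string_map_outside: "m \<notin> snd ` set fl \<Longrightarrow> (m \<in> string_map fl y \<longleftrightarrow> m \<in> y)"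
  by (induction fl) (auto simp: factor_map_def split: fop.splits)

lemma string_nonzero_action: "distinct (map snd fl) \<Longrightarrow> string_weight fl v \<noteq> 0 \<Longrightarrow> e \<in> set fl \<Longrightarrow>
   (fst e = FC \<longrightarrow> snd e \<in> v \<and> snd e \<notin> string_map fl v) \<and>
   (fst e = FCd \<longrightarrow> snd e \<notin> v \<and> snd e \<in> string_map fl v) \<and>
   (fst e \<in> {FZ, FI} \<longrightarrow> (snd e \<in> v \<longleftrightarrow> snd e \<in> string_map fl v))"
proof (induction fl)
  case Nil thus ?case by simp
next
  case (Cons a r)
  have d: "snd a \<notin> snd ` set r" "distinct (map snd r)" using Cons.prems(1) by auto
  have nz: "factor_weight (fst a) (snd a) (string_map r v) \<noteq> 0" "string_weight r v \<noteq> 0" using Cons.prems(2) by auto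
  show ?case
  proof (cases "e = a")
    case True
    have o: "snd a \<in> string_map r v \<longleftrightarrow> snd a \<in> v" using string_map_outside[OF d(1)] .
    show ?thesis using True nz(1) o by (cases "fst a") (auto simp: factor_map_def factor_weight_def)
  next
    case False
    then have e: "e \<in> set r" using Cons.prems(3) by simp
    have ne: "snd e \<noteq> snd a" using d(1) e by (metis image_eqI)
    have IH: "(fst e = FC \<longrightarrow> snd e \<in> v \<and> snd e \<notin> string_map r v) \<and>
   (fst e = FCd \<longrightarrow> snd e \<notin> v \<and> snd e \<in> string_map r v) \<and>
   (fst e \<in> {FZ, FI} \<longrightarrow> (snd e \<in> v \<longleftrightarrow> snd e \<in> string_map r v))" using Cons.IH d(2) nz(2) e by blast
    have "snd e \<in> string_map (a # r) v \<longleftrightarrow> snd e \<in> string_map r v" using ne by (simp add: factor_map_def split: fop.splits)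
    then show ?thesis using IH by blast
  qed
qed

definition z_sign :: "(fop \<times> nat) list \<Rightarrow> nat set \<Rightarrow> complex" where
  "z_sign fl v = prod_list (map (\<lambda>e. if fst e = FZ then (if snd e \<in> v then 1 else -1) else 1) fl)"

lemma z_sign_simps[simp]: "z_sign [] v = 1"
  "z_sign (e # r) v = (if fst e = FZ then (if snd e \<in> v then 1 else -1) else 1) * z_sign r v"
  by (simp_all add: z_sign_def)

definition is_ladder :: "fop \<Rightarrow> bool" where "is_ladder f \<longleftrightarrow> f = FC \<or> f = FCd"

lemma string_filter_ladders: "distinct (map snd fl) \<Longrightarrow>
   string_map fl v = string_map (filter (\<lambda>e. is_ladder (fst e)) fl) v \<and> string_weight fl v = string_weight (filter (\<lambda>e. is_ladder (fst e)) fl) v * z_sign fl v"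
proof (induction fl)
  case Nil thus ?case by simp
next
  case (Cons a r)
  have d: "snd a \<notin> snd ` set r" "distinct (map snd r)" using Cons.prems(1) by auto
  have IH: "string_map r v = string_map (filter (\<lambda>e. is_ladder (fst e)) r) v \<and> string_weight r v = string_weight (filter (\<lambda>e. is_ladder (fst e)) r) v * z_sign r v"
    using Cons.IH d(2) by blast
  have o: "snd a \<in> string_map r v \<longleftrightarrow> snd a \<in> v" using string_map_outside[OF d(1)] .
  show ?case
  proof (cases "is_ladder (fst a)")
    case True
    then have "fst a \<noteq> FZ" by (auto simp: is_ladder_def)
    thus ?thesis using IH True by simp
  next
    case False
    then have "fst a = FZ \<or> fst a = FI" by (cases "fst a") (auto simp: is_ladder_def)
    thus ?thesis
    proof
      assume f: "fst a = FZ"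
      show ?thesis using IH o False f by simp
    next
      assume f: "fst a = FI"
      show ?thesis using IH False f by simp
    qed
  qed
qed

lemma z_sign_cong: "(\<And>e. e \<in> set fl \<Longrightarrow> fst e = FZ \<Longrightarrow> (snd e \<in> v \<longleftrightarrow> snd e \<in> v')) \<Longrightarrow> z_sign fl v = z_sign fl v'"
  by (induction fl) auto

definition flip :: "nat \<Rightarrow> nat set \<Rightarrow> nat set" where
  "flip m v = (if m \<in> v then v - {m} else insert m v)"

lemma z_sign_flip: "distinct (map snd fl) \<Longrightarrow> (FZ, m) \<in> set fl \<Longrightarrow> z_sign fl (flip m v) = - z_sign fl v"
proof (induction fl)
  case Nil thus ?case by simp
next
  case (Cons a r)
  have d: "snd a \<notin> snd ` set r" "distinct (map snd r)" using Cons.prems(1) by auto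
  show ?case
  proof (cases "snd a = m")
    case True
    then have "(FZ, m) \<notin> set r" using d(1) by (metis image_eqI snd_conv)
    then have a: "a = (FZ, m)" using Cons.prems(2) by auto
    have "z_sign r (flip m v) = z_sign r v"
      by (rule z_sign_cong) (use d(1) a in \<open>auto simp: flip_def\<close>)
    then show ?thesis using a by (simp add: flip_def)
  next
    case False
    then have "(FZ, m) \<in> set r" using Cons.prems(2) by auto
    then have "z_sign r (flip m v) = - z_sign r v" using Cons.IH d(2) by blast
    moreover have "(snd a \<in> flip m v) = (snd a \<in> v)" using False by (auto simp: flip_def)
    ultimately show ?thesis by simp
  qed
qed

lemma z_sign_no_FZ: "(\<And>e. e \<in> set fl \<Longrightarrow> fst e \<noteq> FZ) \<Longrightarrow> z_sign fl v = 1"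
  by (induction fl) auto

lemma flip_flip: "flip m (flip m v) = v"
  by (auto simp: flip_def)

lemma sum_Pow_flip_odd:
  fixes g :: "nat set \<Rightarrow> complex"
  assumes "m \<in> M" "finite M" "\<And>v. v \<subseteq> M \<Longrightarrow> g (flip m v) = - g v"
  shows "(\<Sum>v\<in>Pow M. g v) = 0"
proof -
  have "(\<Sum>v\<in>Pow M. g v) = (\<Sum>v\<in>Pow M. g (flip m v))"
    using assms(1) by (intro sum.reindex_bij_witness[of _ "flip m" "flip m"]) (auto simp: flip_flip, auto simp: flip_def split: if_splits)
  also have "\<dots> = - (\<Sum>v\<in>Pow M. g v)" using assms(3) by (simp add: sum_negf)
  finally show ?thesis by simp
qed

lemma mode_eq_iff: "mode L a s = mode L a' s' \<longleftrightarrow> a mod L = a' mod L \<and> s = s'"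
proof
  assume e: "mode L a s = mode L a' s'"
  have "mode L a s div 2 = a mod L" "mode L a' s' div 2 = a' mod L"
       "mode L a s mod 2 = (if s = Up then 0 else 1)" "mode L a' s' mod 2 = (if s' = Up then 0 else 1)"
    by (simp_all add: mode_def)
  then show "a mod L = a' mod L \<and> s = s'" using e by (cases s; cases s') auto
qed (simp add: mode_def)

lemma mod_eq_iff_dvd_diff: "(a mod L = b mod L) \<longleftrightarrow> int L dvd int a - int b"
  by (metis mod_eq_dvd_iff of_nat_eq_iff of_nat_mod)

lemma dvd_small_eq_0: "int L dvd v \<Longrightarrow> - int L < v \<Longrightarrow> v < int L \<Longrightarrow> v = 0"
proof (rule ccontr)
  assume a: "int L dvd v" "- int L < v" "v < int L" "v \<noteq> 0"
  show False
  proof (cases "v > 0")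
    case True thus False using a zdvd_imp_le[of "int L" v] by linarith
  next
    case False
    then have "0 < - v" using a by linarith
    moreover have "int L dvd - v" using a by simp
    ultimately show False using a zdvd_imp_le[of "int L" "-v"] by linarith
  qed
qed

lemma window_separation:
  fixes j t1 t2 L n r l :: nat
  assumes "(j+t1) mod L = n mod L" "(j+t2) mod L = (n+r) mod L" "t1 < l" "t2 < l" "l \<le> r" "r + l \<le> L"
  shows False
proof -
  have "int L dvd int (j+t1) - int n" "int L dvd int (j+t2) - int (n+r)" using assms(1,2) mod_eq_iff_dvd_diff by blast+
  then have "int L dvd (int (j+t2) - int (n+r)) - (int (j+t1) - int n)" by (rule dvd_diff[rotated])
  then have d: "int L dvd int t2 - int t1 - int r" by (simp add: algebra_simps)
  have "int t2 - int t1 - int r = 0" by (rule dvd_small_eq_0[OF d]) (use assms in auto)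
  then show False using assms by linarith
qed

lemma window_ends:
  fixes j t1 t2 L n k :: nat
  assumes "(j+t1) mod L = n mod L" "(j+t2) mod L = (n+(k-1)) mod L" "t1 < k" "t2 < k" "2*k \<le> L" "1 \<le> k"
  shows "t1 = 0 \<and> t2 = k - 1"
proof -
  have "int L dvd int (j+t1) - int n" "int L dvd int (j+t2) - int (n+(k-1))" using assms(1,2) mod_eq_iff_dvd_diff by blast+
  then have "int L dvd (int (j+t2) - int (n+(k-1))) - (int (j+t1) - int n)" by (rule dvd_diff[rotated])
  then have d: "int L dvd int t2 - int t1 - int (k-1)" by (simp add: algebra_simps)
  have "int t2 - int t1 - int (k-1) = 0" by (rule dvd_small_eq_0[OF d]) (use assms in auto)
  then show ?thesis using assms by linarith
qed

lemma mod_add_inj: "((j::nat)+t) mod L = (j+t') mod L \<Longrightarrow> t < L \<Longrightarrow> t' < L \<Longrightarrow> t = t'"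
proof -
  assume a: "(j+t) mod L = (j+t') mod L" "t < L" "t' < L"
  have "int L dvd int (j+t) - int (j+t')" using a(1) mod_eq_iff_dvd_diff by blast
  then have d: "int L dvd int t - int t'" by simp
  have "int t - int t' = 0" by (rule dvd_small_eq_0[OF d]) (use a in auto)
  then show ?thesis by simp
qed

definition window :: "nat \<Rightarrow> nat \<Rightarrow> nat \<Rightarrow> nat set" where
  "window L j l = {m. \<exists>t<l. \<exists>s. m = mode L (j+t) s}"

lemma modes_factor_list: "snd ` set (factor_list L l j \<epsilon>) = window L j l"
proof -
  have "snd ` set (factor_list L l j \<epsilon>) = (\<lambda>t. mode L (j+t) Up) ` {0..<l} \<union> (\<lambda>t. mode L (j+t) Dn) ` {0..<l}"
    unfolding factor_list_def set_append set_map image_Un image_image by simp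
  also have "\<dots> = window L j l" unfolding window_def
  proof (intro equalityI subsetI)
    fix m assume "m \<in> (\<lambda>t. mode L (j+t) Up) ` {0..<l} \<union> (\<lambda>t. mode L (j+t) Dn) ` {0..<l}"
    thus "m \<in> {m. \<exists>t<l. \<exists>s. m = mode L (j+t) s}" by auto
  next
    fix m assume "m \<in> {m. \<exists>t<l. \<exists>s. m = mode L (j+t) s}"
    then obtain t s where "t<l" "m = mode L (j+t) s" by auto
    thus "m \<in> (\<lambda>t. mode L (j+t) Up) ` {0..<l} \<union> (\<lambda>t. mode L (j+t) Dn) ` {0..<l}" by (cases s) auto
  qed
  finally show ?thesis .
qed

lemma distinct_factor_list_modes: "l \<le> L \<Longrightarrow> distinct (map snd (factor_list L l j \<epsilon>))"
proof -
  assume L: "l \<le> L"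
  have i: "inj_on (\<lambda>t. mode L (j+t) s) {0..<l}" for s
  proof (rule inj_onI)
    fix x y assume "x \<in> {0..<l}" "y \<in> {0..<l}" "mode L (j + x) s = mode L (j + y) s"
    then show "x = y" using L mod_add_inj[of j x L y] by (simp add: mode_eq_iff)
  qed
  have m: "map snd (factor_list L l j \<epsilon>) = map (\<lambda>t. mode L (j+t) Up) [0..<l] @ map (\<lambda>t. mode L (j+t) Dn) [0..<l]"
    by (simp add: factor_list_def)
  have disj: "set (map (\<lambda>t. mode L (j+t) Up) [0..<l]) \<inter> set (map (\<lambda>t. mode L (j+t) Dn) [0..<l]) = {}"
    by (auto simp: mode_eq_iff)
  show ?thesis unfolding m distinct_append using i[of Up] i[of Dn] disj by (simp add: distinct_map)
qed

lemma factor_list_mem: "t < l \<Longrightarrow> (\<epsilon> t s, mode L (j+t) s) \<in> set (factor_list L l j \<epsilon>)"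
  by (cases s) (auto simp: factor_list_def)

definition hop_sign :: "nat \<Rightarrow> nat \<Rightarrow> nat set \<Rightarrow> complex" where
  "hop_sign p q v = factor_weight FC q v * factor_weight FCd p (v - {q})"

lemma jw_sign_square_cancel: "jw_sign S m * (jw_sign S m * x) = x"
  by (metis jw_sign_square mult.assoc mult_1_left)

lemma hop_sign_insert: "q \<notin> \<rho> \<Longrightarrow> p \<notin> \<rho> \<Longrightarrow> p \<noteq> q \<Longrightarrow> hop_sign p q (insert q \<rho>) = jw_sign \<rho> q * jw_sign \<rho> p"
proof -
  assume a: "q \<notin> \<rho>" "p \<notin> \<rho>" "p \<noteq> q"
  have "insert q \<rho> - {q} = \<rho>" using a by auto
  then show ?thesis using a by (simp add: hop_sign_def factor_weight_def jw_sign_insert_self)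
qed

lemma hop_sign_chain: "\<alpha> \<notin> \<rho> \<Longrightarrow> \<beta> \<notin> \<rho> \<Longrightarrow> \<gamma> \<notin> \<rho> \<Longrightarrow> \<alpha> \<noteq> \<beta> \<Longrightarrow> \<alpha> \<noteq> \<gamma> \<Longrightarrow> \<beta> \<noteq> \<gamma> \<Longrightarrow>
   hop_sign \<alpha> \<gamma> (insert \<gamma> \<rho>) * hop_sign \<gamma> \<beta> (insert \<beta> \<rho>) = hop_sign \<alpha> \<beta> (insert \<beta> \<rho>)"
  by (simp add: hop_sign_insert mult_ac jw_sign_square_cancel jw_sign_square)

lemma hop_sign_square: "\<alpha> \<notin> \<rho> \<Longrightarrow> \<beta> \<notin> \<rho> \<Longrightarrow> \<alpha> \<noteq> \<beta> \<Longrightarrow> hop_sign \<alpha> \<beta> (insert \<beta> \<rho>) * hop_sign \<alpha> \<beta> (insert \<beta> \<rho>) = 1"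
  by (simp add: hop_sign_insert mult_ac jw_sign_square_cancel jw_sign_square)

lemma hop_sign_chain_exchange: "\<alpha> \<notin> \<rho> \<Longrightarrow> \<beta> \<notin> \<rho> \<Longrightarrow> \<gamma> \<notin> \<rho> \<Longrightarrow> \<alpha> \<noteq> \<beta> \<Longrightarrow> \<alpha> \<noteq> \<gamma> \<Longrightarrow> \<beta> \<noteq> \<gamma> \<Longrightarrow>
   hop_sign \<gamma> \<beta> (insert \<alpha> (insert \<beta> \<rho>)) * hop_sign \<alpha> \<gamma> (insert \<gamma> (insert \<beta> \<rho>)) = - hop_sign \<alpha> \<beta> (insert \<gamma> (insert \<beta> \<rho>))"
proof -
  assume a: "\<alpha> \<notin> \<rho>" "\<beta> \<notin> \<rho>" "\<gamma> \<notin> \<rho>" "\<alpha> \<noteq> \<beta>" "\<alpha> \<noteq> \<gamma>" "\<beta> \<noteq> \<gamma>"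
  have s1: "insert \<alpha> (insert \<beta> \<rho>) - {\<beta>} = insert \<alpha> \<rho>" using a by auto
  have s2: "insert \<gamma> (insert \<beta> \<rho>) - {\<gamma>} = insert \<beta> \<rho>" using a by auto
  have s3: "insert \<gamma> (insert \<beta> \<rho>) - {\<beta>} = insert \<gamma> \<rho>" using a by auto
  have e1: "hop_sign \<gamma> \<beta> (insert \<alpha> (insert \<beta> \<rho>)) = (if \<alpha> < \<beta> then -1 else 1) * jw_sign \<rho> \<beta> * ((if \<alpha> < \<gamma> then -1 else 1) * jw_sign \<rho> \<gamma>)"
    using a by (simp add: hop_sign_def factor_weight_def s1 jw_sign_insert jw_sign_insert_self)
  have e2: "hop_sign \<alpha> \<gamma> (insert \<gamma> (insert \<beta> \<rho>)) = (if \<beta> < \<gamma> then -1 else 1) * jw_sign \<rho> \<gamma> * ((if \<beta> < \<alpha> then -1 else 1) * jw_sign \<rho> \<alpha>)"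
    using a by (simp add: hop_sign_def factor_weight_def s2 jw_sign_insert jw_sign_insert_self)
  have e3: "hop_sign \<alpha> \<beta> (insert \<gamma> (insert \<beta> \<rho>)) = (if \<gamma> < \<beta> then -1 else 1) * jw_sign \<rho> \<beta> * ((if \<gamma> < \<alpha> then -1 else 1) * jw_sign \<rho> \<alpha>)"
    using a by (simp add: hop_sign_def factor_weight_def s3 jw_sign_insert jw_sign_insert_self)
  show ?thesis unfolding e1 e2 e3 using a
    by (cases "\<alpha> < \<beta>"; cases "\<alpha> < \<gamma>"; cases "\<beta> < \<gamma>"; simp add: mult_ac jw_sign_square_cancel jw_sign_square)
qed

lemma hop_sign_nonzero: "hop_sign p q v \<noteq> 0 \<Longrightarrow> q \<in> v \<and> p \<notin> v - {q}"
  by (auto simp: hop_sign_def factor_weight_def split: if_splits)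

lemma hop_sign_eq: "hop_sign p q = (\<lambda>v. factor_weight FC q v * factor_weight FCd p (v - {q}))"
  by (rule ext) (simp add: hop_sign_def)

definition hop_op :: "nat \<Rightarrow> nat \<Rightarrow> nat \<Rightarrow> op" where
  "hop_op L p q = mono_op L (\<lambda>y. insert p (y - {q})) (hop_sign p q)"

lemma ccre_cann_hop_op: "0 < L \<Longrightarrow> op_mult L (ccre L j s) (cann L j' s) = hop_op L (mode L j s) (mode L j' s)"
  unfolding hop_op_def
  by (simp add: ccre_mono_op cann_mono_op, subst mono_op_mult) (auto simp: factor_map_def o_def hop_sign_eq mult.commute)

definition is_diagonal :: "op \<Rightarrow> bool" where "is_diagonal X \<longleftrightarrow> (\<forall>u v. u \<noteq> v \<longrightarrow> X u v = 0)"

lemma diagonal_mono_op_id: "is_diagonal (mono_op L id w)" by (simp add: is_diagonal_def mono_op_def)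

lemma interaction_diagonal: "0 < L \<Longrightarrow> is_diagonal (op_mult L (op_add (num L j Up) (op_smult c (op_id L)))
                                 (op_add (num L j Dn) (op_smult c (op_id L))))"
  by (simp add: num_mono_op op_id_mono_op mono_op_smult mono_op_add, subst mono_op_mult) (auto simp: diagonal_mono_op_id)

definition hopping_elem :: "nat \<Rightarrow> nat \<times> spin \<Rightarrow> nat set \<Rightarrow> nat set \<Rightarrow> complex" where
  "hopping_elem L js u v = hop_op L (mode L (fst js) (snd js)) (mode L (fst js + 1) (snd js)) u v
                         + hop_op L (mode L (fst js + 1) (snd js)) (mode L (fst js) (snd js)) u v"

lemma hubbard_offdiag: "0 < L \<Longrightarrow> u \<noteq> v \<Longrightarrow> hubbard L U u v = -2 * (\<Sum>js\<in>{1..L} \<times> UNIV. hopping_elem L js u v)"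
proof -
  assume L: "0 < L" and uv: "u \<noteq> v"
  have d: "(\<Sum>j\<in>{1..L}. op_mult L (op_add (num L j Up) (op_smult (-1/2) (op_id L)))
                                 (op_add (num L j Dn) (op_smult (-1/2) (op_id L))) u v) = 0"
    using interaction_diagonal[OF L] uv by (simp add: is_diagonal_def)
  have "hubbard L U u v = -2 * op_sum (\<lambda>(j, s). op_add (op_mult L (ccre L j s) (cann L (j+1) s))
                                              (op_mult L (ccre L (j+1) s) (cann L j s))) ({1..L} \<times> UNIV) u v
     + 4 * complex_of_real U * op_sum (\<lambda>j. op_mult L (op_add (num L j Up) (op_smult (-1/2) (op_id L)))
                                 (op_add (num L j Dn) (op_smult (-1/2) (op_id L)))) {1..L} u v"
    by (simp add: hubbard_def op_add_def op_smult_def)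
  also have "op_sum (\<lambda>j. op_mult L (op_add (num L j Up) (op_smult (-1/2) (op_id L)))
                                 (op_add (num L j Dn) (op_smult (-1/2) (op_id L)))) {1..L} u v = 0"
    using d by (simp add: op_sum_def)
  finally show ?thesis using L by (simp add: op_sum_def case_prod_beta ccre_cann_hop_op op_add_def hopping_elem_def)
qed

lemma UNIV_spin: "(UNIV :: spin set) = {Up, Dn}"
  by (auto, metis spin.exhaust)

lemma finite_spin[simp]: "finite (UNIV :: spin set)"
  by (simp add: UNIV_spin)

lemma sum_eq_single: "finite A \<Longrightarrow> a \<in> A \<Longrightarrow> (\<And>x. x \<in> A \<Longrightarrow> x \<noteq> a \<Longrightarrow> g x = 0) \<Longrightarrow> sum g A = g a"
proof -
  assume a: "finite A" "a \<in> A" "\<And>x. x \<in> A \<Longrightarrow> x \<noteq> a \<Longrightarrow> g x = 0"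
  have "sum g A = sum g {a}" by (rule sum.mono_neutral_right) (use a in auto)
  then show ?thesis by simp
qed

lemma bond_modes_eq: assumes L: "3 \<le> L" and e: "{mode L j s, mode L (j+1) s} = {mode L j' s', mode L (j'+1) s'}"
  shows "j mod L = j' mod L \<and> s = s'"
proof -
  from e have "(mode L j s = mode L j' s' \<and> mode L (j+1) s = mode L (j'+1) s') \<or>
               (mode L j s = mode L (j'+1) s' \<and> mode L (j+1) s = mode L j' s')"
    by (simp add: doubleton_eq_iff)
  then show ?thesis
  proof
    assume "mode L j s = mode L j' s' \<and> mode L (j+1) s = mode L (j'+1) s'"
    thus ?thesis by (simp add: mode_eq_iff)
  next
    assume h: "mode L j s = mode L (j'+1) s' \<and> mode L (j+1) s = mode L j' s'"
    then have "j mod L = (j'+1) mod L" "(j+1) mod L = j' mod L" by (simp_all add: mode_eq_iff)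
    then have "int L dvd int j - int (j'+1)" "int L dvd int (j+1) - int j'" using mod_eq_iff_dvd_diff by blast+
    then have "int L dvd (int (j+1) - int j') - (int j - int (j'+1))" by (rule dvd_diff[rotated])
    then have "int L dvd 2" by simp
    then have "int L \<le> 2" by (rule zdvd_imp_le) simp
    thus ?thesis using L by simp
  qed
qed

definition is_bond :: "nat \<Rightarrow> nat \<Rightarrow> nat \<Rightarrow> bool" where
  "is_bond L p q \<longleftrightarrow> (\<exists>j s. {p, q} = {mode L j s, mode L (j+1) s})"

lemma hop_op_nonzero: "hop_op L p q u v \<noteq> 0 \<Longrightarrow> v \<subseteq> modes L \<and> u = insert p (v - {q}) \<and> q \<in> v \<and> p \<notin> v - {q}"
  unfolding hop_op_def mono_op_def using hop_sign_nonzero by (auto split: if_splits)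

lemma hopping_elem_nonzero:
  assumes "hopping_elem L js u v \<noteq> 0" and "u \<noteq> v"
  obtains p q where "{p,q} = {mode L (fst js) (snd js), mode L (fst js + 1) (snd js)}"
    and "v \<subseteq> modes L" "q \<in> v" "p \<notin> v" "u = insert p (v - {q})"
proof -
  obtain p q where pq: "{p,q} = {mode L (fst js) (snd js), mode L (fst js + 1) (snd js)}" "hop_op L p q u v \<noteq> 0"
    using assms(1) unfolding hopping_elem_def by (metis add.right_neutral add_0 insert_commute)
  from hop_op_nonzero[OF pq(2)] have h: "v \<subseteq> modes L" "u = insert p (v - {q})" "q \<in> v" "p \<notin> v - {q}"
    by auto
  have "p \<notin> v"
  proof
    assume "p \<in> v"
    then have "u = v" using h(2-4) by auto
    then show False using assms(2) by simp
  qed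
  with pq(1) h show thesis using that by blast
qed

lemma hubbard_offdiag_nonzero: assumes L: "0 < L" and uv: "u \<noteq> v" and nz: "hubbard L U u v \<noteq> 0"
  shows "\<exists>p q. is_bond L p q \<and> v \<subseteq> modes L \<and> q \<in> v \<and> p \<notin> v \<and> u = insert p (v - {q})"
proof -
  have "(\<Sum>js\<in>{1..L} \<times> UNIV. hopping_elem L js u v) \<noteq> 0" using nz hubbard_offdiag[OF L uv] by auto
  then obtain js where "hopping_elem L js u v \<noteq> 0" by (meson sum.not_neutral_contains_not_neutral)
  then obtain p q where "{p,q} = {mode L (fst js) (snd js), mode L (fst js + 1) (snd js)}"
    and "v \<subseteq> modes L" "q \<in> v" "p \<notin> v" "u = insert p (v - {q})"
    using uv by (rule hopping_elem_nonzero)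
  then show ?thesis unfolding is_bond_def by blast
qed

lemma site_eq_if_mod_eq: "a \<in> {1..L} \<Longrightarrow> b \<in> {1..L} \<Longrightarrow> a mod L = b mod L \<Longrightarrow> a = (b::nat)"
proof -
  assume a: "a \<in> {1..L}" "b \<in> {1..L}" "a mod L = b mod L"
  have "int L dvd int a - int b" using a(3) mod_eq_iff_dvd_diff by blast
  moreover have "- int L < int a - int b" "int a - int b < int L" using a(1,2) by auto
  ultimately have "int a - int b = 0" by (rule dvd_small_eq_0)
  then show ?thesis by simp
qed

lemma hopping_elem_own_bond:
  assumes "{p,q} = {mode L j s, mode L (j+1) s}" and "q \<in> v" "p \<notin> v" "v \<subseteq> modes L"
  shows "hopping_elem L (j, s) (insert p (v - {q})) v = hop_sign p q v"
proof -
  have pq: "p \<noteq> q" using assms by auto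
  have "hopping_elem L (j, s) (insert p (v - {q})) v
      = hop_op L p q (insert p (v - {q})) v + hop_op L q p (insert p (v - {q})) v"
    using assms(1) pq by (auto simp: hopping_elem_def doubleton_eq_iff add.commute)
  moreover have "hop_op L p q (insert p (v - {q})) v = hop_sign p q v"
    using assms by (simp add: hop_op_def mono_op_def)
  moreover have "insert q (v - {p}) \<noteq> insert p (v - {q})" using assms by auto
  then have "hop_op L q p (insert p (v - {q})) v = 0" by (simp add: hop_op_def mono_op_def)
  ultimately show ?thesis by simp
qed

lemma hubbard_bond_value: assumes L: "3 \<le> L" and hp: "is_bond L p q" and v: "v \<subseteq> modes L" "q \<in> v" "p \<notin> v"
  shows "hubbard L U (insert p (v - {q})) v = -2 * hop_sign p q v"
proof -
  define u where "u = insert p (v - {q})"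
  obtain j s where jp: "{p,q} = {mode L j s, mode L (j+1) s}" using hp by (auto simp: is_bond_def)
  have uv: "u \<noteq> v" using v by (auto simp: u_def)
  define j0 where "j0 = (if j mod L = 0 then L else j mod L)"
  have j0: "j0 \<in> {1..L}" "j0 mod L = j mod L" using L by (auto simp: j0_def)
  have "(j0+1) mod L = (j+1) mod L" using j0(2) by (metis mod_add_left_eq)
  then have "mode L j0 s = mode L j s" "mode L (j0+1) s = mode L (j+1) s"
    using j0(2) by (simp_all add: mode_eq_iff)
  then have jp0: "{p,q} = {mode L j0 s, mode L (j0+1) s}" using jp by simp
  have other: "hopping_elem L js u v = 0" if js: "js \<in> {1..L} \<times> UNIV" "js \<noteq> (j0, s)" for js
  proof (rule ccontr)
    assume "hopping_elem L js u v \<noteq> 0"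
    then obtain a b where ab: "{a,b} = {mode L (fst js) (snd js), mode L (fst js + 1) (snd js)}"
      and "b \<in> v" "a \<notin> v" "u = insert a (v - {b})"
      using uv by (rule hopping_elem_nonzero)
    then have "{mode L j0 s, mode L (j0+1) s} = {mode L (fst js) (snd js), mode L (fst js + 1) (snd js)}"
      using jp0 v by (auto simp: u_def)
    then have "j0 mod L = fst js mod L" "s = snd js" using bond_modes_eq[OF L] by blast+
    then have "fst js = j0" using site_eq_if_mod_eq[of "fst js" L j0] j0 js(1) by auto
    then show False using js \<open>s = snd js\<close> by (cases js) auto
  qed
  have "hubbard L U u v = -2 * (\<Sum>js\<in>{1..L} \<times> UNIV. hopping_elem L js u v)"
    using hubbard_offdiag[of L u v U] L uv by simp
  also have "(\<Sum>js\<in>{1..L} \<times> UNIV. hopping_elem L js u v) = hopping_elem L (j0, s) u v"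
    by (rule sum_eq_single) (use other j0 in auto)
  also have "\<dots> = hop_sign p q v" unfolding u_def by (rule hopping_elem_own_bond[OF jp0 v(2,3,1)])
  finally show ?thesis by (simp add: u_def)
qed

lemma mod_add_right_eq_iff: "((a::nat) + c) mod L = (b + c) mod L \<longleftrightarrow> a mod L = b mod L"
  by (simp add: mod_eq_iff_dvd_diff)

lemma mod_add_neq: "0 < r \<Longrightarrow> r < L \<Longrightarrow> ((i::nat) + r) mod L \<noteq> i mod L"
proof
  assume a: "0 < r" "r < L" "(i + r) mod L = i mod L"
  have "int L dvd int (i+r) - int i" using a(3) mod_eq_iff_dvd_diff by blast
  then have "int L dvd int r" by simp
  then have "int L \<le> int r" using a(1) by (intro zdvd_imp_le) auto
  then show False using a(2) by simp
qed

lemma mode_in_window: "mode L n s \<in> window L j l \<Longrightarrow> \<exists>t<l. (j+t) mod L = n mod L"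
  by (auto simp: window_def mode_eq_iff)
lemma window_gap:
  assumes "mode L n1 s1 \<in> window L j l" and "mode L n2 s2 \<in> window L j l"
    and "n2 mod L = (n1 + r) mod L" and "l \<le> r" and "r + l \<le> L"
  shows False
proof -
  obtain t1 where "t1 < l" "(j+t1) mod L = n1 mod L" using mode_in_window assms(1) by blast
  moreover obtain t2 where "t2 < l" "(j+t2) mod L = n2 mod L" using mode_in_window assms(2) by blast
  ultimately show False using window_separation[of j t1 L n1 t2 r l] assms(3-5) by auto
qed

lemma bond_classification:
  fixes L k i j l p q :: nat
  assumes k2: "2 \<le> k" and Lk: "2*k+2 \<le> L" and lk: "l \<le> k"
    and hp: "is_bond L p q"
    and Wc: "\<And>m. (m \<in> {mode L i \<sigma>, mode L (i+k) \<mu>}) \<noteq> (m \<in> {p,q}) \<Longrightarrow> m \<in> window L j l"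
  shows "{p,q} = {mode L i \<sigma>, mode L (i+1) \<sigma>} \<or> {p,q} = {mode L (i+k) \<mu>, mode L (i+k-1) \<mu>}"
proof -
  define A where "A = mode L i \<sigma>"
  define B where "B = mode L (i+k) \<mu>"
  obtain j' s' where pq: "{p,q} = {mode L j' s', mode L (j'+1) s'}" using hp by (auto simp: is_bond_def)
  define P1 where "P1 = mode L j' s'"
  define P2 where "P2 = mode L (j'+1) s'"
  have pq': "{p,q} = {P1,P2}" using pq by (simp add: P1_def P2_def)
  have AB: "A \<noteq> B"
    using mod_add_neq[of k L i] k2 Lk by (auto simp: A_def B_def mode_eq_iff)
  have nk1: "(i + (k+1)) mod L \<noteq> i mod L" using mod_add_neq[of "k+1" L i] k2 Lk by simp
  have WA: "A \<in> window L j l" if "A \<notin> {P1,P2}" using Wc[of A] that AB pq' by (auto simp: A_def B_def)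
  have WB: "B \<in> window L j l" if "B \<notin> {P1,P2}" using Wc[of B] that AB pq' by (auto simp: A_def B_def)
  have WP: "P \<in> window L j l" if "P \<in> {P1,P2}" "P \<notin> {A,B}" for P using Wc[of P] that pq' by (auto simp: A_def B_def)
  have gap: False if "mode L n1 s1 \<in> window L j l" and "mode L n2 s2 \<in> window L j l"
     and "n2 mod L = (n1 + (k+1)) mod L" for n1 n2 s1 s2
    using window_gap[OF that] lk Lk by simp
  have n1: "(j' + 1) mod L \<noteq> j' mod L" using mod_add_neq[of 1 L j'] Lk by simp
  consider "A = P1" | "A = P2" | "B = P2" | "B = P1" | "A \<notin> {P1,P2}" "B \<notin> {P1,P2}" by blast
  then show ?thesis
  proof cases
    case 1
    then have "i mod L = j' mod L" "\<sigma> = s'" by (simp_all add: A_def P1_def mode_eq_iff)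
    then have "P2 = mode L (i+1) \<sigma>" using mod_add_right_eq_iff[of j' 1 L i] by (simp add: P2_def mode_eq_iff)
    then show ?thesis using 1 pq' by (simp add: A_def)
  next
    case 2
    then have e: "i mod L = (j'+1) mod L" "\<sigma> = s'" by (simp_all add: A_def P2_def mode_eq_iff)
    have e2: "(i + k) mod L = (j' + (k+1)) mod L" using e(1) mod_add_right_eq_iff[of i k L "j'+1"] by simp
    show ?thesis
    proof (cases "B = P1")
      case True
      then have "(i+k) mod L = j' mod L" by (simp add: B_def P1_def mode_eq_iff)
      then have "(i+k+1) mod L = (j'+1) mod L" using mod_add_right_eq_iff[of "i+k" 1 L j'] by simp
      then have "(i + (k+1)) mod L = i mod L" using e(1) by simp
      then show ?thesis using nk1 by simp
    next
      case False
      then have "B \<notin> {P1,P2}" using 2 AB by auto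
      moreover have "P1 \<notin> {A,B}" using False 2 AB e n1 by (auto simp: P1_def P2_def A_def mode_eq_iff)
      ultimately show ?thesis using gap[of j' s' "i+k" \<mu>] WB WP[of P1] e2 by (auto simp: P1_def B_def)
    qed
  next
    case 3
    then have e: "(i+k) mod L = (j'+1) mod L" "\<mu> = s'" by (simp_all add: B_def P2_def mode_eq_iff)
    have "i+k = (i+k-1)+1" using k2 by simp
    then have "(i+k-1) mod L = j' mod L" using e(1) mod_add_right_eq_iff[of "i+k-1" 1 L j'] by simp
    then have "P1 = mode L (i+k-1) \<mu>" by (simp add: P1_def mode_eq_iff e(2))
    then show ?thesis using 3 pq' by (auto simp: B_def)
  next
    case 4
    then have e: "(i+k) mod L = j' mod L" "\<mu> = s'" by (simp_all add: B_def P1_def mode_eq_iff)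
    then have e2: "(j'+1) mod L = (i + (k+1)) mod L" using mod_add_right_eq_iff[of "i+k" 1 L j'] by simp
    show ?thesis
    proof (cases "A = P2")
      case True
      then have "i mod L = (j'+1) mod L" by (simp add: A_def P2_def mode_eq_iff)
      then show ?thesis using nk1 e2 by simp
    next
      case False
      then have "A \<notin> {P1,P2}" using 4 AB by auto
      moreover have "P2 \<notin> {A,B}" using False 4 AB e n1 by (auto simp: P1_def P2_def B_def mode_eq_iff)
      ultimately show ?thesis using gap[of i \<sigma> "j'+1" s'] WA WP[of P2] e2 by (auto simp: P2_def A_def)
    qed
  next
    case 5
    then have "A \<in> window L j l" "B \<in> window L j l" using WA WB by auto
    then show ?thesis using window_gap[of L i \<sigma> j l "i+k" \<mu> k] lk Lk by (simp add: A_def B_def)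
  qed
qed
lemma basis_elem_nonzero: "0 < L \<Longrightarrow> basis_elem L l j \<epsilon> u v \<noteq> 0 \<Longrightarrow>
   v \<subseteq> modes L \<and> u = string_map (factor_list L l j \<epsilon>) v \<and> string_weight (factor_list L l j \<epsilon>) v \<noteq> 0"
  by (simp add: basis_elem_mono_op mono_op_def split: if_splits)

lemma basis_elem_outside_window: "0 < L \<Longrightarrow> basis_elem L l j \<epsilon> u v \<noteq> 0 \<Longrightarrow> m \<notin> window L j l \<Longrightarrow> (m \<in> u \<longleftrightarrow> m \<in> v)"
  using basis_elem_nonzero[of L l j \<epsilon> u v] string_map_outside[of m "factor_list L l j \<epsilon>" v] by (simp add: modes_factor_list)

lemma window_mode_positions:
  fixes L k n j t :: nat
  assumes Lk: "2*k+2 \<le> L" and k2: "2 \<le> k" and jn: "j mod L = n mod L" and t: "t < k"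
  shows "mode L (j+t) s = mode L n \<sigma> \<longleftrightarrow> t = 0 \<and> s = \<sigma>"
    and "mode L (j+t) s = mode L (n+k-1) \<mu> \<longleftrightarrow> t = k-1 \<and> s = \<mu>"
    and "mode L (j+t) s \<in> window L n k"
proof -
  have "(j+t) mod L = n mod L \<longleftrightarrow> t = 0"
    using mod_add_inj[of j t L 0] t Lk jn by auto
  then show "mode L (j+t) s = mode L n \<sigma> \<longleftrightarrow> t = 0 \<and> s = \<sigma>" by (auto simp: mode_eq_iff)
  have jn2: "(j + (k-1)) mod L = (n+k-1) mod L"
    using jn k2 mod_add_right_eq_iff[of j "k-1" L n] by (simp add: Nat.add_diff_assoc)
  have "(j+t) mod L = (n+k-1) mod L \<longleftrightarrow> t = k-1"
    using mod_add_inj[of j t L "k-1"] t Lk jn2 by auto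
  then show "mode L (j+t) s = mode L (n+k-1) \<mu> \<longleftrightarrow> t = k-1 \<and> s = \<mu>" by (auto simp: mode_eq_iff)
  have "mode L (j+t) s = mode L (n+t) s" using jn mod_add_right_eq_iff[of j t L n] by (simp add: mode_eq_iff)
  then show "mode L (j+t) s \<in> window L n k" using t by (auto simp: window_def)
qed

definition dressed_q :: "nat \<Rightarrow> nat \<Rightarrow> spin \<Rightarrow> spin \<Rightarrow> bool \<Rightarrow> nat \<Rightarrow> nat \<Rightarrow> nat \<Rightarrow> (nat \<Rightarrow> spin \<Rightarrow> fop) \<Rightarrow> bool" where
  "dressed_q L k \<sigma> \<mu> b n l j \<epsilon> \<longleftrightarrow> l = k \<and> j mod L = n mod L \<and> \<epsilon> 0 \<sigma> = cs b \<and> \<epsilon> (k-1) \<mu> = cs (\<not> b)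
     \<and> (\<forall>t<k. \<forall>s. (t,s) \<noteq> (0,\<sigma>) \<longrightarrow> (t,s) \<noteq> (k-1,\<mu>) \<longrightarrow> \<epsilon> t s = FZ \<or> \<epsilon> t s = FI)"

lemma dressed_q_if_nonzero:
  fixes L k n l j :: nat
  assumes k2: "2 \<le> k" and Lk: "2*k+2 \<le> L" and lk: "l \<le> k"
    and nz: "basis_elem L l j \<epsilon> u v \<noteq> 0"
    and a1: "a1 = mode L n \<sigma>" and a2: "a2 = mode L (n+k-1) \<mu>"
    and same: "\<And>m. m \<notin> {a1,a2} \<Longrightarrow> (m \<in> u \<longleftrightarrow> m \<in> v)"
    and moved: "(a1\<in>u) \<noteq> (a1\<in>v)" "(a2\<in>u) \<noteq> (a2\<in>v)" "(a1\<in>v) \<noteq> (a2\<in>v)"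
    and b: "b \<longleftrightarrow> a1 \<notin> v"
  shows "dressed_q L k \<sigma> \<mu> b n l j \<epsilon>"
proof -
  have L0: "0 < L" using Lk by simp
  have W1: "a1 \<in> window L j l" using basis_elem_outside_window[OF L0 nz, of a1] moved(1) by auto
  have W2: "a2 \<in> window L j l" using basis_elem_outside_window[OF L0 nz, of a2] moved(2) by auto
  obtain t1 where t1: "t1 < l" "(j+t1) mod L = n mod L" using mode_in_window W1 a1 by blast
  obtain t2 where t2: "t2 < l" "(j+t2) mod L = (n+(k-1)) mod L" using mode_in_window W2 a2 k2
    by (metis Nat.add_diff_assoc le_trans one_le_numeral)
  have lk': "l = k"
  proof (rule ccontr)
    assume "l \<noteq> k"
    then have lk1: "l \<le> k - 1" using lk by simp
    have "k - 1 + l \<le> L" using lk1 Lk by linarith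
    from window_separation[OF t1(2) t2(2) t1(1) t2(1) lk1 this] show False .
  qed
  have jn: "j mod L = n mod L" using window_ends[of j t1 L n t2 k] t1 t2 lk' Lk k2 by auto
  have d: "distinct (map snd (factor_list L l j \<epsilon>))" using distinct_factor_list_modes lk' Lk by simp
  have bn: "u = string_map (factor_list L l j \<epsilon>) v" "string_weight (factor_list L l j \<epsilon>) v \<noteq> 0"
    using basis_elem_nonzero[OF L0 nz] by auto
  have ent: "(\<epsilon> t s = FC \<longrightarrow> mode L (j+t) s \<in> v \<and> mode L (j+t) s \<notin> u) \<and>
             (\<epsilon> t s = FCd \<longrightarrow> mode L (j+t) s \<notin> v \<and> mode L (j+t) s \<in> u) \<and>
             (\<epsilon> t s \<in> {FZ, FI} \<longrightarrow> (mode L (j+t) s \<in> v \<longleftrightarrow> mode L (j+t) s \<in> u))" if "t < k" for t s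
    using string_nonzero_action[OF d bn(2) factor_list_mem[of t l \<epsilon> s L j]] that lk' bn(1) by simp
  note pos = window_mode_positions[OF Lk k2 jn]
  have k0: "0 < k" "k - 1 < k" using k2 by auto
  have "\<epsilon> 0 \<sigma> = cs b"
    using ent[OF k0(1), of \<sigma>] pos(1)[OF k0(1), of \<sigma> \<sigma>] a1 moved b
    by (cases "\<epsilon> 0 \<sigma>") (auto simp: cs_def)
  moreover have "\<epsilon> (k-1) \<mu> = cs (\<not> b)"
    using ent[OF k0(2), of \<mu>] pos(2)[OF k0(2), of \<mu> \<mu>] a1 a2 moved b
    by (cases "\<epsilon> (k-1) \<mu>") (auto simp: cs_def)
  moreover have "\<epsilon> t s = FZ \<or> \<epsilon> t s = FI" if "t < k" "(t,s) \<noteq> (0,\<sigma>)" "(t,s) \<noteq> (k-1,\<mu>)" for t s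
  proof -
    have "mode L (j+t) s \<notin> {a1,a2}" using pos(1,2)[OF that(1)] a1 a2 that by auto
    then show ?thesis using same ent[OF that(1), of s] by (cases "\<epsilon> t s") auto
  qed
  ultimately show ?thesis using lk' jn by (auto simp: dressed_q_def)
qed

lemma filter_upt_ends: assumes "2 \<le> k" "\<And>t. t < k \<Longrightarrow> P t \<longleftrightarrow> (t = 0 \<and> c1) \<or> (t = k-1 \<and> c2)"
  shows "filter P [0..<k] = (if c1 then [0] else []) @ (if c2 then [k-1] else [])"
proof -
  have u: "[0..<k] = 0 # [1..<k-1] @ [k-1]"
    using assms(1) by (metis One_nat_def Suc_pred le_trans less_eq_Suc_le not_less_eq_eq numeral_2_eq_2 upt_Suc_append upt_conv_Cons zero_less_Suc)
  have m: "filter P [1..<k-1] = []"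
    using assms by (auto simp: filter_empty_conv)
  have "0 \<noteq> k - 1" using assms(1) by simp
  then show ?thesis unfolding u using assms m by auto
qed

lemma cann_ccre_anticomm: "p \<noteq> q \<Longrightarrow> factor_weight FC q (insert p v) * factor_weight FCd p v = - hop_sign p q v"
proof -
  assume pq: "p \<noteq> q"
  show ?thesis
  proof (cases "q \<in> v \<and> p \<notin> v")
    case False thus ?thesis using pq by (auto simp: hop_sign_def factor_weight_def)
  next
    case True
    have vq: "v = insert q (v - {q})" using True by auto
    have "jw_sign v p = (if q < p then -1 else 1) * jw_sign (v - {q}) p"
      by (subst vq, subst jw_sign_insert) auto
    then have j: "jw_sign (v - {q}) p = (if q < p then -1 else 1) * jw_sign v p" by auto
    show ?thesis using True pq
      by (auto simp: hop_sign_def factor_weight_def jw_sign_insert j)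
  qed
qed

lemma string_pair_normal: "string_map [(FCd,p),(FC,q)] v = insert p (v - {q})" "string_weight [(FCd,p),(FC,q)] v = hop_sign p q v"
  by (simp_all add: factor_map_def hop_sign_def mult.commute)

lemma string_pair_reversed: "p \<noteq> q \<Longrightarrow> string_map [(FC,q),(FCd,p)] v = insert p (v - {q})"
   "p \<noteq> q \<Longrightarrow> string_weight [(FC,q),(FCd,p)] v = - hop_sign p q v"
  by (auto simp: factor_map_def cann_ccre_anticomm)

definition order_sign :: "spin \<Rightarrow> spin \<Rightarrow> bool \<Rightarrow> complex" where
  "order_sign \<sigma> \<mu> b = (if (\<sigma> = Dn \<and> \<mu> = Up) = b then -1 else 1)"

lemma dressed_q_ladders:
  fixes L k n j :: nat
  assumes k2: "2 \<le> k" and Lk: "2*k+2 \<le> L" and dq: "dressed_q L k \<sigma> \<mu> b n l j \<epsilon>"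
  shows "filter (\<lambda>e. is_ladder (fst e)) (factor_list L k j \<epsilon>) =
    (if \<sigma> = Dn \<and> \<mu> = Up then [(cs (\<not> b), mode L (n+k-1) \<mu>), (cs b, mode L n \<sigma>)]
     else [(cs b, mode L n \<sigma>), (cs (\<not> b), mode L (n+k-1) \<mu>)])"
proof -
  have s: "j mod L = n mod L" "\<epsilon> 0 \<sigma> = cs b" "\<epsilon> (k-1) \<mu> = cs (\<not> b)"
    "\<And>t s. t < k \<Longrightarrow> (t,s) \<noteq> (0,\<sigma>) \<Longrightarrow> (t,s) \<noteq> (k-1,\<mu>) \<Longrightarrow> \<epsilon> t s = FZ \<or> \<epsilon> t s = FI"
    using dq by (auto simp: dressed_q_def)
  have ma1: "mode L (j+0) \<sigma> = mode L n \<sigma>" using s(1) by (simp add: mode_eq_iff)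
  have ma2: "mode L (j+(k-1)) \<mu> = mode L (n+k-1) \<mu>"
    using s(1) k2 mod_add_right_eq_iff[of j "k-1" L n] by (simp add: mode_eq_iff)
  have ladder: "is_ladder (\<epsilon> t s) \<longleftrightarrow> (t = 0 \<and> s = \<sigma>) \<or> (t = k-1 \<and> s = \<mu>)" if "t < k" for t s
  proof (cases "(t,s) = (0,\<sigma>) \<or> (t,s) = (k-1,\<mu>)")
    case True thus ?thesis using s(2,3) by (cases b) (auto simp: is_ladder_def cs_def)
  next
    case False thus ?thesis using s(4)[OF that, of s] by (auto simp: is_ladder_def)
  qed
  have up: "filter (\<lambda>t. is_ladder (\<epsilon> t Up)) [0..<k] = (if \<sigma> = Up then [0] else []) @ (if \<mu> = Up then [k-1] else [])"
    by (rule filter_upt_ends[OF k2]) (use ladder in auto)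
  have dn: "filter (\<lambda>t. is_ladder (\<epsilon> t Dn)) [0..<k] = (if \<sigma> = Dn then [0] else []) @ (if \<mu> = Dn then [k-1] else [])"
    by (rule filter_upt_ends[OF k2]) (use ladder in auto)
  have "filter (\<lambda>e. is_ladder (fst e)) (factor_list L k j \<epsilon>) =
      map (\<lambda>t. (\<epsilon> t Up, mode L (j+t) Up)) (filter (\<lambda>t. is_ladder (\<epsilon> t Up)) [0..<k]) @
      map (\<lambda>t. (\<epsilon> t Dn, mode L (j+t) Dn)) (filter (\<lambda>t. is_ladder (\<epsilon> t Dn)) [0..<k])"
    by (simp add: factor_list_def filter_map o_def)
  also have "\<dots> = (if \<sigma> = Dn \<and> \<mu> = Up then [(cs (\<not> b), mode L (n+k-1) \<mu>), (cs b, mode L n \<sigma>)]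
     else [(cs b, mode L n \<sigma>), (cs (\<not> b), mode L (n+k-1) \<mu>)])"
    unfolding up dn using ma1 ma2 s(2,3) by (cases \<sigma>; cases \<mu>) auto
  finally show ?thesis .
qed

text \<open>A dressed \<open>q\<close> acts as a single hop, with the Jordan-Wigner sign of its ladder pair,
  the sign \<open>order_sign\<close> from bringing that pair into normal order, and the \<open>z\<close>-string signs.\<close>
lemma basis_elem_dressed_value:
  fixes L k n j :: nat
  assumes k2: "2 \<le> k" and Lk: "2*k+2 \<le> L" and dq: "dressed_q L k \<sigma> \<mu> b n l j \<epsilon>"
    and a1: "a1 = mode L n \<sigma>" and a2: "a2 = mode L (n+k-1) \<mu>"
    and sd: "(src = a1 \<and> dst = a2) \<or> (src = a2 \<and> dst = a1)" and b: "b \<longleftrightarrow> dst = a1"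
    and v: "v \<subseteq> modes L"
  shows "basis_elem L l j \<epsilon> u v = (if u = insert dst (v - {src})
           then order_sign \<sigma> \<mu> b * z_sign (factor_list L k j \<epsilon>) v * hop_sign dst src v else 0)"
proof -
  have L0: "0 < L" using Lk by simp
  have lk: "l = k" using dq by (simp add: dressed_q_def)
  have a12: "a1 \<noteq> a2"
  proof
    assume "a1 = a2"
    then have "n mod L = (n + (k-1)) mod L" using k2 by (simp add: a1 a2 mode_eq_iff)
    moreover have "k - 1 < L" using Lk by linarith
    ultimately show False using mod_add_neq[of "k-1" L n] k2 by simp
  qed
  define F2 where "F2 = (if \<sigma> = Dn \<and> \<mu> = Up then [(cs (\<not> b), a2), (cs b, a1)] else [(cs b, a1), (cs (\<not> b), a2)])"
  have d: "distinct (map snd (factor_list L k j \<epsilon>))" using distinct_factor_list_modes Lk by simp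
  have af: "string_map (factor_list L k j \<epsilon>) v = string_map F2 v"
    "string_weight (factor_list L k j \<epsilon>) v = string_weight F2 v * z_sign (factor_list L k j \<epsilon>) v"
    using string_filter_ladders[OF d, of v] dressed_q_ladders[OF k2 Lk dq] by (auto simp: F2_def a1 a2)
  have F2v: "string_map F2 v = insert dst (v - {src}) \<and> string_weight F2 v = order_sign \<sigma> \<mu> b * hop_sign dst src v"
    using sd b a12
    by (cases b) (auto simp: F2_def cs_def string_pair_normal string_pair_reversed order_sign_def
        simp del: string_map.simps string_weight.simps)
  show ?thesis
    unfolding basis_elem_mono_op[OF L0] mono_op_def lk af using F2v v by auto
qed

lemma dressed_q_z_sign_cong:
  fixes L k n j :: nat
  assumes k2: "2 \<le> k" and Lk: "2*k+2 \<le> L" and dq: "dressed_q L k \<sigma> \<mu> b n l j \<epsilon>"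
    and same: "\<And>m. m \<in> window L n k \<Longrightarrow> m \<noteq> mode L n \<sigma> \<Longrightarrow> m \<noteq> mode L (n+k-1) \<mu> \<Longrightarrow> (m \<in> v \<longleftrightarrow> m \<in> w)"
  shows "z_sign (factor_list L k j \<epsilon>) v = z_sign (factor_list L k j \<epsilon>) w"
proof (rule z_sign_cong)
  fix e assume e: "e \<in> set (factor_list L k j \<epsilon>)" "fst e = FZ"
  obtain t s where ts: "t < k" "e = (\<epsilon> t s, mode L (j+t) s)" using e(1) unfolding factor_list_def by auto
  have jn: "j mod L = n mod L" using dq by (simp add: dressed_q_def)
  have "(t,s) \<noteq> (0,\<sigma>)" "(t,s) \<noteq> (k-1,\<mu>)"
    using dq e(2) ts by (auto simp: dressed_q_def cs_def split: if_splits)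
  then show "(snd e \<in> v) = (snd e \<in> w)"
    using same window_mode_positions[OF Lk k2 jn ts(1)] ts(2) by auto
qed

text \<open>The part of the matrix element \<open>[P, H]\<^sub>x\<^sub>y\<close> in which \<open>H\<close> hops a particle along the
  bond \<open>{e, e'}\<close>.\<close>
definition bond_commutator :: "op \<Rightarrow> op \<Rightarrow> nat \<Rightarrow> nat \<Rightarrow> nat set \<Rightarrow> nat set \<Rightarrow> complex" where
  "bond_commutator P H e e' x y =
     (if (e \<in> y) \<noteq> (e' \<in> y) then P x (flip e (flip e' y)) * H (flip e (flip e' y)) y else 0)
   - (if (e \<in> x) \<noteq> (e' \<in> x) then H x (flip e (flip e' x)) * P (flip e (flip e' x)) y else 0)"

lemma is_bond_sym: "is_bond L p q \<Longrightarrow> is_bond L q p"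
  by (auto simp: is_bond_def insert_commute)

text \<open>A particle is carried from \<open>src\<close> to \<open>dst\<close> via the mode \<open>e'\<close>: one step is a hop of \<open>H\<close>
  along a bond at \<open>e'\<close>, the other is done by \<open>P\<close>, whose weight depends on the occupations
  only through \<open>\<chi>\<close>.\<close>
locale hop_triple =
  fixes L :: nat and src dst e' :: nat and \<eta> :: "nat set" and \<chi> :: "nat set \<Rightarrow> complex"
  assumes L3: "3 \<le> L"
    and dist: "src \<noteq> dst" "src \<noteq> e'" "dst \<noteq> e'" and nin: "src \<notin> \<eta>" "dst \<notin> \<eta>"
    and md: "insert src (insert dst (insert e' \<eta>)) \<subseteq> modes L"
    and chi: "\<And>v. (\<And>m. m \<notin> {src,dst,e'} \<Longrightarrow> (m\<in>v \<longleftrightarrow> m\<in>\<eta>)) \<Longrightarrow> \<chi> v = \<chi> \<eta>"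
begin

lemma bond_term_src_unoccupied:
  assumes hp: "is_bond L src e'"
    and Pw: "\<And>u v. v \<subseteq> modes L \<Longrightarrow> Pw u v = (if u = insert dst (v - {e'}) then \<tau> * \<chi> v * hop_sign dst e' v else 0)"
    and e'_out: "e' \<notin> \<eta>"
  shows "hop_sign dst src (insert src \<eta>) * bond_commutator Pw (hubbard L U) src e' (insert dst \<eta>) (insert src \<eta>)
   = -2 * \<tau> * \<chi> \<eta>"
proof -
  define s where "s = hop_sign dst src (insert src \<eta>)"
  have z1: "flip src (flip e' (insert src \<eta>)) = insert e' \<eta>" using e'_out nin dist by (auto simp: flip_def)
  have c2: "\<not> ((src \<in> insert dst \<eta>) \<noteq> (e' \<in> insert dst \<eta>))" using e'_out nin dist by auto
  have c1: "(src \<in> insert src \<eta>) \<noteq> (e' \<in> insert src \<eta>)" using e'_out dist by auto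
  have H: "hubbard L U (insert e' \<eta>) (insert src \<eta>) = -2 * hop_sign e' src (insert src \<eta>)"
  proof -
    have "insert e' (insert src \<eta> - {src}) = insert e' \<eta>" using nin by auto
    then show ?thesis using hubbard_bond_value[OF L3 is_bond_sym[OF hp], of "insert src \<eta>" U] md e'_out dist by auto
  qed
  have P: "Pw (insert dst \<eta>) (insert e' \<eta>) = \<tau> * \<chi> \<eta> * hop_sign dst e' (insert e' \<eta>)"
  proof -
    have "insert dst \<eta> = insert dst (insert e' \<eta> - {e'})" using e'_out by auto
    moreover have "\<chi> (insert e' \<eta>) = \<chi> \<eta>" by (rule chi) auto
    ultimately show ?thesis using Pw[of "insert e' \<eta>" "insert dst \<eta>"] md by auto
  qed
  have t1: "hop_sign dst e' (insert e' \<eta>) * hop_sign e' src (insert src \<eta>) = s"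
    unfolding s_def by (rule hop_sign_chain) (use e'_out nin dist in auto)
  have sq: "s * s = 1" unfolding s_def by (rule hop_sign_square) (use nin dist in auto)
  have "s * (\<tau> * \<chi> \<eta> * hop_sign dst e' (insert e' \<eta>) * (-2 * hop_sign e' src (insert src \<eta>))) = -2 * \<tau> * \<chi> \<eta> * (s * (hop_sign dst e' (insert e' \<eta>) * hop_sign e' src (insert src \<eta>)))"
    by (simp add: algebra_simps)
  also have "\<dots> = -2 * \<tau> * \<chi> \<eta>" unfolding t1 sq by simp
  finally show ?thesis using c1 c2 unfolding bond_commutator_def z1 H P s_def[symmetric] by simp
qed

lemma bond_term_src_occupied:
  assumes hp: "is_bond L src e'"
    and Pw: "\<And>u v. v \<subseteq> modes L \<Longrightarrow> Pw u v = (if u = insert dst (v - {e'}) then \<tau> * \<chi> v * hop_sign dst e' v else 0)"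
    and e'_in: "e' \<in> \<eta>"
  shows "hop_sign dst src (insert src \<eta>) * bond_commutator Pw (hubbard L U) src e' (insert dst \<eta>) (insert src \<eta>)
   = -2 * \<tau> * \<chi> \<eta>"
proof -
  define \<rho> where "\<rho> = \<eta> - {e'}"
  have eta: "\<eta> = insert e' \<rho>" "e' \<notin> \<rho>" "src \<notin> \<rho>" "dst \<notin> \<rho>" using e'_in nin by (auto simp: \<rho>_def)
  define s where "s = hop_sign dst src (insert src \<eta>)"
  have c1: "\<not> ((src \<in> insert src \<eta>) \<noteq> (e' \<in> insert src \<eta>))" using e'_in by auto
  have c2: "(src \<in> insert dst \<eta>) \<noteq> (e' \<in> insert dst \<eta>)" using e'_in nin dist by auto
  have z2: "flip src (flip e' (insert dst \<eta>)) = insert src (insert dst \<rho>)" using eta dist by (auto simp: flip_def)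
  have H: "hubbard L U (insert dst \<eta>) (insert src (insert dst \<rho>)) = -2 * hop_sign e' src (insert src (insert dst \<rho>))"
  proof -
    have "insert e' (insert src (insert dst \<rho>) - {src}) = insert dst \<eta>" using eta dist by auto
    then show ?thesis using hubbard_bond_value[OF L3 is_bond_sym[OF hp], of "insert src (insert dst \<rho>)" U] md eta dist by auto
  qed
  have P: "Pw (insert src (insert dst \<rho>)) (insert src \<eta>) = \<tau> * \<chi> \<eta> * hop_sign dst e' (insert src \<eta>)"
  proof -
    have "insert src (insert dst \<rho>) = insert dst (insert src \<eta> - {e'})" using eta dist by auto
    moreover have "\<chi> (insert src \<eta>) = \<chi> \<eta>" by (rule chi) auto
    ultimately show ?thesis using Pw[of "insert src \<eta>" "insert src (insert dst \<rho>)"] md by auto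
  qed
  have t2: "hop_sign e' src (insert src (insert dst \<rho>)) * hop_sign dst e' (insert src \<eta>) = - s"
  proof -
    have "hop_sign e' src (insert dst (insert src \<rho>)) * hop_sign dst e' (insert e' (insert src \<rho>)) = - hop_sign dst src (insert e' (insert src \<rho>))"
      by (rule hop_sign_chain_exchange) (use eta dist in auto)
    moreover have "insert src (insert dst \<rho>) = insert dst (insert src \<rho>)" "insert src \<eta> = insert e' (insert src \<rho>)"
      using eta by auto
    ultimately show ?thesis by (simp add: s_def)
  qed
  have sq: "s * s = 1" unfolding s_def by (rule hop_sign_square) (use nin dist in auto)
  have "s * (0 - (-2 * hop_sign e' src (insert src (insert dst \<rho>))) * (\<tau> * \<chi> \<eta> * hop_sign dst e' (insert src \<eta>)))
      = 2 * \<tau> * \<chi> \<eta> * (s * (hop_sign e' src (insert src (insert dst \<rho>)) * hop_sign dst e' (insert src \<eta>)))"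
    by (simp add: algebra_simps)
  also have "\<dots> = -2 * \<tau> * \<chi> \<eta>" unfolding t2 using sq by simp
  finally show ?thesis using c1 c2 unfolding bond_commutator_def z2 H P s_def[symmetric] by simp
qed

lemma bond_term_src:
  assumes "is_bond L src e'"
    and "\<And>u v. v \<subseteq> modes L \<Longrightarrow> Pw u v = (if u = insert dst (v - {e'}) then \<tau> * \<chi> v * hop_sign dst e' v else 0)"
  shows "hop_sign dst src (insert src \<eta>) * bond_commutator Pw (hubbard L U) src e' (insert dst \<eta>) (insert src \<eta>)
   = -2 * \<tau> * \<chi> \<eta>"
  using bond_term_src_occupied[OF assms] bond_term_src_unoccupied[OF assms] by blast

lemma bond_term_dst_unoccupied:
  assumes hp: "is_bond L dst e'"
    and Pw: "\<And>u v. v \<subseteq> modes L \<Longrightarrow> Pw u v = (if u = insert e' (v - {src}) then \<tau> * \<chi> v * hop_sign e' src v else 0)"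
    and e'_out: "e' \<notin> \<eta>"
  shows "hop_sign dst src (insert src \<eta>) * bond_commutator Pw (hubbard L U) dst e' (insert dst \<eta>) (insert src \<eta>)
   = 2 * \<tau> * \<chi> \<eta>"
proof -
  define s where "s = hop_sign dst src (insert src \<eta>)"
  have c1: "\<not> ((dst \<in> insert src \<eta>) \<noteq> (e' \<in> insert src \<eta>))" using e'_out nin dist by auto
  have c2: "(dst \<in> insert dst \<eta>) \<noteq> (e' \<in> insert dst \<eta>)" using e'_out dist by auto
  have z2: "flip dst (flip e' (insert dst \<eta>)) = insert e' \<eta>" using e'_out nin dist by (auto simp: flip_def)
  have H: "hubbard L U (insert dst \<eta>) (insert e' \<eta>) = -2 * hop_sign dst e' (insert e' \<eta>)"
  proof -
    have "insert dst (insert e' \<eta> - {e'}) = insert dst \<eta>" using e'_out by auto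
    then show ?thesis using hubbard_bond_value[OF L3 hp, of "insert e' \<eta>" U] md e'_out nin dist by auto
  qed
  have P: "Pw (insert e' \<eta>) (insert src \<eta>) = \<tau> * \<chi> \<eta> * hop_sign e' src (insert src \<eta>)"
  proof -
    have "insert e' \<eta> = insert e' (insert src \<eta> - {src})" using nin by auto
    moreover have "\<chi> (insert src \<eta>) = \<chi> \<eta>" by (rule chi) auto
    ultimately show ?thesis using Pw[of "insert src \<eta>" "insert e' \<eta>"] md by auto
  qed
  have t1: "hop_sign dst e' (insert e' \<eta>) * hop_sign e' src (insert src \<eta>) = s"
    unfolding s_def by (rule hop_sign_chain) (use e'_out nin dist in auto)
  have sq: "s * s = 1" unfolding s_def by (rule hop_sign_square) (use nin dist in auto)
  have "s * (0 - (-2 * hop_sign dst e' (insert e' \<eta>)) * (\<tau> * \<chi> \<eta> * hop_sign e' src (insert src \<eta>)))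
      = 2 * \<tau> * \<chi> \<eta> * (s * (hop_sign dst e' (insert e' \<eta>) * hop_sign e' src (insert src \<eta>)))"
    by (simp add: algebra_simps)
  also have "\<dots> = 2 * \<tau> * \<chi> \<eta>" unfolding t1 sq by simp
  finally have fin: "s * (0 - (-2 * hop_sign dst e' (insert e' \<eta>)) * (\<tau> * \<chi> \<eta> * hop_sign e' src (insert src \<eta>))) = 2 * \<tau> * \<chi> \<eta>" .
  have bc: "bond_commutator Pw (hubbard L U) dst e' (insert dst \<eta>) (insert src \<eta>)
      = 0 - hubbard L U (insert dst \<eta>) (flip dst (flip e' (insert dst \<eta>)))
          * Pw (flip dst (flip e' (insert dst \<eta>))) (insert src \<eta>)"
    unfolding bond_commutator_def using c1 c2 by (simp only: if_True if_False not_True_eq_False not_False_eq_True)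
  show ?thesis unfolding bc z2 H P s_def[symmetric] using fin by (simp only: mult.assoc)
qed

lemma bond_term_dst_occupied:
  assumes hp: "is_bond L dst e'"
    and Pw: "\<And>u v. v \<subseteq> modes L \<Longrightarrow> Pw u v = (if u = insert e' (v - {src}) then \<tau> * \<chi> v * hop_sign e' src v else 0)"
    and e'_in: "e' \<in> \<eta>"
  shows "hop_sign dst src (insert src \<eta>) * bond_commutator Pw (hubbard L U) dst e' (insert dst \<eta>) (insert src \<eta>)
   = 2 * \<tau> * \<chi> \<eta>"
proof -
  define \<rho> where "\<rho> = \<eta> - {e'}"
  have eta: "\<eta> = insert e' \<rho>" "e' \<notin> \<rho>" "src \<notin> \<rho>" "dst \<notin> \<rho>" using e'_in nin by (auto simp: \<rho>_def)
  define s where "s = hop_sign dst src (insert src \<eta>)"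
  have c1: "(dst \<in> insert src \<eta>) \<noteq> (e' \<in> insert src \<eta>)" using e'_in nin dist by auto
  have c2: "\<not> ((dst \<in> insert dst \<eta>) \<noteq> (e' \<in> insert dst \<eta>))" using e'_in by auto
  have z1: "flip dst (flip e' (insert src \<eta>)) = insert dst (insert src \<rho>)" using eta dist by (auto simp: flip_def)
  have H: "hubbard L U (insert dst (insert src \<rho>)) (insert src \<eta>) = -2 * hop_sign dst e' (insert src \<eta>)"
  proof -
    have "insert dst (insert src \<eta> - {e'}) = insert dst (insert src \<rho>)" using eta dist by auto
    then show ?thesis using hubbard_bond_value[OF L3 hp, of "insert src \<eta>" U] md eta dist by auto
  qed
  have P: "Pw (insert dst \<eta>) (insert dst (insert src \<rho>)) = \<tau> * \<chi> \<eta> * hop_sign e' src (insert dst (insert src \<rho>))"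
  proof -
    have "insert dst \<eta> = insert e' (insert dst (insert src \<rho>) - {src})" using eta dist by auto
    moreover have "\<chi> (insert dst (insert src \<rho>)) = \<chi> \<eta>" by (rule chi) (use eta in auto)
    moreover have "insert dst (insert src \<rho>) \<subseteq> modes L" using md eta by auto
    ultimately show ?thesis using Pw[of "insert dst (insert src \<rho>)" "insert dst \<eta>"] by auto
  qed
  have t2: "hop_sign e' src (insert dst (insert src \<rho>)) * hop_sign dst e' (insert src \<eta>) = - s"
  proof -
    have "hop_sign e' src (insert dst (insert src \<rho>)) * hop_sign dst e' (insert e' (insert src \<rho>)) = - hop_sign dst src (insert e' (insert src \<rho>))"
      by (rule hop_sign_chain_exchange) (use eta dist in auto)
    moreover have "insert src \<eta> = insert e' (insert src \<rho>)" using eta by auto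
    ultimately show ?thesis by (simp add: s_def)
  qed
  have sq: "s * s = 1" unfolding s_def by (rule hop_sign_square) (use nin dist in auto)
  have "s * (\<tau> * \<chi> \<eta> * hop_sign e' src (insert dst (insert src \<rho>)) * (-2 * hop_sign dst e' (insert src \<eta>)))
      = -2 * \<tau> * \<chi> \<eta> * (s * (hop_sign e' src (insert dst (insert src \<rho>)) * hop_sign dst e' (insert src \<eta>)))"
    by (simp add: algebra_simps)
  also have "\<dots> = 2 * \<tau> * \<chi> \<eta>" unfolding t2 using sq by simp
  finally have fin: "s * (\<tau> * \<chi> \<eta> * hop_sign e' src (insert dst (insert src \<rho>)) * (-2 * hop_sign dst e' (insert src \<eta>))) = 2 * \<tau> * \<chi> \<eta>" .
  have bc: "bond_commutator Pw (hubbard L U) dst e' (insert dst \<eta>) (insert src \<eta>)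
      = Pw (insert dst \<eta>) (flip dst (flip e' (insert src \<eta>)))
          * hubbard L U (flip dst (flip e' (insert src \<eta>))) (insert src \<eta>) - 0"
    unfolding bond_commutator_def using c1 c2 by (simp only: if_True if_False not_True_eq_False not_False_eq_True)
  show ?thesis unfolding bc z1 H P s_def[symmetric] using fin by (simp only: diff_zero mult.assoc)
qed

lemma bond_term_dst:
  assumes "is_bond L dst e'"
    and "\<And>u v. v \<subseteq> modes L \<Longrightarrow> Pw u v = (if u = insert e' (v - {src}) then \<tau> * \<chi> v * hop_sign e' src v else 0)"
  shows "hop_sign dst src (insert src \<eta>) * bond_commutator Pw (hubbard L U) dst e' (insert dst \<eta>) (insert src \<eta>)
   = 2 * \<tau> * \<chi> \<eta>"
  using bond_term_dst_occupied[OF assms] bond_term_dst_unoccupied[OF assms] by blast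

end

text \<open>Here \<open>{e, f} = {src, dst}\<close>, the bond \<open>{e, e'}\<close> leaves the window of \<open>P\<close>, and \<open>f, e'\<close>
  are the ends \<open>a1, a2\<close> of a dressed \<open>q\<close> at \<open>n\<close>: the only basis elements that can complete
  the hop along the bond to a transition between \<open>src\<close> and \<open>dst\<close>.\<close>
lemma bond_commutator_undressed:
  fixes L k n l j :: nat and H :: op
  assumes k2: "2 \<le> k" and Lk: "2*k+2 \<le> L" and lk: "l \<le> k"
    and a1: "a1 = mode L n \<sigma>" and a2: "a2 = mode L (n+k-1) \<mu>"
    and fe: "(f = a1 \<and> e' = a2) \<or> (f = a2 \<and> e' = a1)"
    and sd: "(e = src \<and> f = dst) \<or> (e = dst \<and> f = src)"
    and a12: "a1 \<noteq> a2" and ea: "e \<notin> {a1,a2}"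
    and b: "b \<longleftrightarrow> a1 = (if e = src then dst else e')"
    and nin: "src \<notin> \<eta>" "dst \<notin> \<eta>"
    and not_dressed: "\<not> dressed_q L k \<sigma> \<mu> b n l j \<epsilon>"
  shows "bond_commutator (basis_elem L l j \<epsilon>) H e e' (insert dst \<eta>) (insert src \<eta>) = 0"
proof -
  have sdne: "src \<noteq> dst" using sd fe ea by auto
  have e'ne: "e' \<noteq> src" "e' \<noteq> dst" using sd fe ea a12 by auto
  have "basis_elem L l j \<epsilon> x y = 0"
    if "(x = insert dst \<eta> \<and> y = flip e (flip e' (insert src \<eta>)) \<and> (e \<in> insert src \<eta>) \<noteq> (e' \<in> insert src \<eta>))
      \<or> (x = flip e (flip e' (insert dst \<eta>)) \<and> y = insert src \<eta> \<and> (e \<in> insert dst \<eta>) \<noteq> (e' \<in> insert dst \<eta>))"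
    for x y
  proof (rule ccontr)
    assume nz: "basis_elem L l j \<epsilon> x y \<noteq> 0"
    have "dressed_q L k \<sigma> \<mu> b n l j \<epsilon>"
      by (rule dressed_q_if_nonzero[OF k2 Lk lk nz a1 a2])
         (use that fe sd a12 ea b nin sdne e'ne in \<open>auto simp: flip_def split: if_splits\<close>)
    then show False using not_dressed by simp
  qed
  then show ?thesis unfolding bond_commutator_def by auto
qed

lemma bond_commutator_dressed:
  fixes L k n l j :: nat and U :: real
  assumes k2: "2 \<le> k" and Lk: "2*k+2 \<le> L"
    and a1: "a1 = mode L n \<sigma>" and a2: "a2 = mode L (n+k-1) \<mu>"
    and fe: "(f = a1 \<and> e' = a2) \<or> (f = a2 \<and> e' = a1)"
    and sd: "(e = src \<and> f = dst) \<or> (e = dst \<and> f = src)"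
    and a12: "a1 \<noteq> a2" and ea: "e \<notin> {a1,a2}"
    and hp: "is_bond L e e'" and eout: "e \<notin> window L n k"
    and b: "b \<longleftrightarrow> a1 = (if e = src then dst else e')"
    and nin: "src \<notin> \<eta>" "dst \<notin> \<eta>" and md: "insert src (insert dst (insert e' \<eta>)) \<subseteq> modes L"
    and dq: "dressed_q L k \<sigma> \<mu> b n l j \<epsilon>"
  shows "hop_sign dst src (insert src \<eta>) * bond_commutator (basis_elem L l j \<epsilon>) (hubbard L U) e e' (insert dst \<eta>) (insert src \<eta>)
    = (if e = src then -2 else 2) * order_sign \<sigma> \<mu> b * z_sign (factor_list L k j \<epsilon>) \<eta>"
proof -
  have L3: "3 \<le> L" using Lk k2 by simp
  have sdne: "src \<noteq> dst" using sd fe ea by auto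
  have e'ne: "e' \<noteq> src" "e' \<noteq> dst" using sd fe ea a12 by auto
  have chi: "z_sign (factor_list L k j \<epsilon>) v = z_sign (factor_list L k j \<epsilon>) \<eta>"
    if "\<And>m. m \<notin> {src,dst,e'} \<Longrightarrow> (m\<in>v \<longleftrightarrow> m\<in>\<eta>)" for v
  proof (rule dressed_q_z_sign_cong[OF k2 Lk dq])
    fix m assume "m \<in> window L n k" "m \<noteq> mode L n \<sigma>" "m \<noteq> mode L (n+k-1) \<mu>"
    then have "m \<notin> {src,dst,e'}" using a1 a2 eout sd fe by auto
    then show "(m \<in> v) = (m \<in> \<eta>)" using that by blast
  qed
  interpret hop_triple L src dst e' \<eta> "z_sign (factor_list L k j \<epsilon>)"
    by (unfold_locales; (rule L3 sdne nin md chi)?) (use e'ne in auto)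
  show ?thesis
  proof (cases "e = src")
    case True
    have Pw: "basis_elem L l j \<epsilon> u v = (if u = insert dst (v - {e'})
        then order_sign \<sigma> \<mu> b * z_sign (factor_list L k j \<epsilon>) v * hop_sign dst e' v else 0)"
      if "v \<subseteq> modes L" for u v
      by (rule basis_elem_dressed_value[OF k2 Lk dq a1 a2 _ _ that]) (use fe sd b True sdne in auto)
    have "is_bond L src e'" using hp True by simp
    from bond_term_src[OF this Pw] show ?thesis using True by simp
  next
    case False
    then have e: "e = dst" and f: "f = src" using sd by auto
    have Pw: "basis_elem L l j \<epsilon> u v = (if u = insert e' (v - {src})
        then order_sign \<sigma> \<mu> b * z_sign (factor_list L k j \<epsilon>) v * hop_sign e' src v else 0)"
      if "v \<subseteq> modes L" for u v
      by (rule basis_elem_dressed_value[OF k2 Lk dq a1 a2 _ _ that]) (use fe f b False in auto)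
    have "is_bond L dst e'" using hp e by simp
    from bond_term_dst[OF this Pw] show ?thesis using e False by simp
  qed
qed

lemma bond_commutator_term:
  fixes L k n l j :: nat and U :: real
  assumes k2: "2 \<le> k" and Lk: "2*k+2 \<le> L" and lk: "l \<le> k"
    and a1: "a1 = mode L n \<sigma>" and a2: "a2 = mode L (n+k-1) \<mu>"
    and fe: "(f = a1 \<and> e' = a2) \<or> (f = a2 \<and> e' = a1)"
    and sd: "(e = src \<and> f = dst) \<or> (e = dst \<and> f = src)"
    and a12: "a1 \<noteq> a2" and ea: "e \<notin> {a1,a2}"
    and hp: "is_bond L e e'" and eout: "e \<notin> window L n k"
    and b: "b \<longleftrightarrow> a1 = (if e = src then dst else e')"
    and nin: "src \<notin> \<eta>" "dst \<notin> \<eta>" and md: "insert src (insert dst (insert e' \<eta>)) \<subseteq> modes L"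
  shows "hop_sign dst src (insert src \<eta>) * bond_commutator (basis_elem L l j \<epsilon>) (hubbard L U) e e' (insert dst \<eta>) (insert src \<eta>)
    = (if dressed_q L k \<sigma> \<mu> b n l j \<epsilon>
       then (if e = src then -2 else 2) * order_sign \<sigma> \<mu> b * z_sign (factor_list L k j \<epsilon>) \<eta> else 0)"
  using bond_commutator_dressed[OF k2 Lk a1 a2 fe sd a12 ea hp eout b nin md]
    bond_commutator_undressed[OF k2 Lk lk a1 a2 fe sd a12 ea b nin]
  by auto

lemma sum_two_support:
  fixes g :: "nat set \<Rightarrow> complex"
  assumes S: "finite S" and ch: "\<And>z. z \<in> S \<Longrightarrow> g z \<noteq> 0 \<Longrightarrow> (z = z1 \<and> c1) \<or> (z = z2 \<and> c2)"
    and ne: "z1 \<noteq> z2" and m1: "c1 \<Longrightarrow> z1 \<in> S" and m2: "c2 \<Longrightarrow> z2 \<in> S"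
  shows "sum g S = (if c1 then g z1 else 0) + (if c2 then g z2 else 0)"
proof -
  have "sum g S = (\<Sum>z\<in>S. (if c1 then (if z = z1 then g z1 else 0) else 0) + (if c2 then (if z = z2 then g z2 else 0) else 0))"
  proof (rule sum.cong[OF refl])
    fix z assume z: "z \<in> S"
    show "g z = (if c1 then (if z = z1 then g z1 else 0) else 0) + (if c2 then (if z = z2 then g z2 else 0) else 0)"
    proof (cases "g z = 0")
      case True thus ?thesis using ne by auto
    next
      case False thus ?thesis using ch[OF z False] ne by auto
    qed
  qed
  also have "\<dots> = (if c1 then g z1 else 0) + (if c2 then g z2 else 0)"
    using S m1 m2 by (simp add: sum.distrib)
  finally show ?thesis .
qed

lemma UNIV_fop: "(UNIV :: fop set) = {FC, FCd, FZ, FI}"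
  by (auto, metis fop.exhaust)

lemma finite_fop[simp]: "finite (UNIV :: fop set)" by (simp add: UNIV_fop)

lemma finite_labels_below: "finite {\<epsilon> :: nat \<Rightarrow> spin \<Rightarrow> fop. \<forall>t\<ge>k. \<forall>s. \<epsilon> t s = FI}"
proof -
  let ?E = "{\<epsilon> :: nat \<Rightarrow> spin \<Rightarrow> fop. \<forall>t\<ge>k. \<forall>s. \<epsilon> t s = FI}"
  let ?g = "\<lambda>\<epsilon> :: nat \<Rightarrow> spin \<Rightarrow> fop. map (\<lambda>t. (\<epsilon> t Up, \<epsilon> t Dn)) [0..<k]"
  have inj: "inj_on ?g ?E"
  proof (rule inj_onI)
    fix e1 e2 assume e: "e1 \<in> ?E" "e2 \<in> ?E" "?g e1 = ?g e2"
    show "e1 = e2"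
    proof (intro ext)
      fix t s
      show "e1 t s = e2 t s"
      proof (cases "t < k")
        case True
        then have "(e1 t Up, e1 t Dn) = (e2 t Up, e2 t Dn)" using e(3) by (simp add: map_eq_conv)
        then show ?thesis by (cases s) auto
      next
        case False thus ?thesis using e(1,2) by auto
      qed
    qed
  qed
  have "?g ` ?E \<subseteq> {xs. set xs \<subseteq> UNIV \<and> length xs = k}" by auto
  moreover have "finite {xs :: (fop \<times> fop) list. set xs \<subseteq> UNIV \<and> length xs = k}"
    by (rule finite_lists_length_eq) (metis finite_fop finite_SigmaI UNIV_Times_UNIV)
  ultimately have "finite (?g ` ?E)" by (rule finite_subset)
  then show ?thesis using inj by (rule finite_imageD)
qed

definition local_index :: "nat \<Rightarrow> nat \<Rightarrow> (nat \<times> nat \<times> (nat \<Rightarrow> spin \<Rightarrow> fop)) set" where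
  "local_index L k = {(l, i, \<epsilon>). l \<in> {1..k} \<and> i \<in> {1..L} \<and> valid_label l \<epsilon>}"

lemma finite_local_index: "finite (local_index L k)"
proof -
  have "local_index L k \<subseteq> {1..k} \<times> {1..L} \<times> {\<epsilon>. \<forall>t\<ge>k. \<forall>s. \<epsilon> t s = FI}"
    by (auto simp: local_index_def valid_label_def)
  then show ?thesis using finite_labels_below[of k] by (meson finite_SigmaI finite_atLeastAtMost finite_subset)
qed

lemma local_op_local_index: "local_op L k coef = op_sum (\<lambda>(l, i, \<epsilon>). op_smult (coef l i \<epsilon>) (basis_elem L l i \<epsilon>)) (local_index L k)"
  by (simp add: local_op_def local_index_def)

lemma op_mult_sum_left: "op_mult L (op_sum f I) Hm x y = (\<Sum>\<iota>\<in>I. op_mult L (f \<iota>) Hm x y)"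
  unfolding op_mult_def op_sum_def by (simp add: sum_distrib_right sum.swap[of _ "Pow (modes L)"])

lemma op_mult_sum_right: "op_mult L Hm (op_sum f I) x y = (\<Sum>\<iota>\<in>I. op_mult L Hm (f \<iota>) x y)"
  unfolding op_mult_def op_sum_def by (simp add: sum_distrib_left sum.swap[of _ "Pow (modes L)"])

lemma op_mult_smult_left: "op_mult L (op_smult c P) Hm x y = c * op_mult L P Hm x y"
  unfolding op_mult_def op_smult_def by (simp add: sum_distrib_left mult.assoc)

lemma op_mult_smult_right: "op_mult L Hm (op_smult c P) x y = c * op_mult L Hm P x y"
  unfolding op_mult_def op_smult_def by (simp add: sum_distrib_left mult_ac)

lemma window_subset_modes: "0 < L \<Longrightarrow> window L j l \<subseteq> modes L"
  using mode_in by (auto simp: window_def)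

lemma window_subset_Suc: "window L i k \<subseteq> window L i (k+1)"
  unfolding window_def by (auto, metis less_SucI)

lemma window_Suc_subset: "window L (i+1) k \<subseteq> window L i (k+1)"
proof
  fix m assume "m \<in> window L (i+1) k"
  then obtain t s where "t < k" "m = mode L (i+1+t) s" by (auto simp: window_def)
  then show "m \<in> window L i (k+1)" unfolding window_def by (intro CollectI exI[of _ "t+1"]) auto
qed

lemma flip_subset_modes: "Y \<subseteq> modes L \<Longrightarrow> a \<in> modes L \<Longrightarrow> flip a Y \<subseteq> modes L"
  by (auto simp: flip_def)

lemma q_label_dressed: "2 \<le> k \<Longrightarrow> j mod L = n mod L \<Longrightarrow> dressed_q L k \<sigma> \<mu> b n k j (q_label k \<sigma> b \<mu>)"
  unfolding dressed_q_def q_label_def by (auto simp: cs_def)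

lemma q_label_ne_FZ: "q_label k \<sigma> b \<mu> t s \<noteq> FZ"
  by (auto simp: q_label_def cs_def)

lemma dressed_q_other_has_FZ:
  assumes k2: "2 \<le> k" and dq: "dressed_q L k \<sigma> \<mu> b n l j \<epsilon>" and vl: "valid_label l \<epsilon>"
    and ne: "\<epsilon> \<noteq> q_label k \<sigma> b \<mu>"
  obtains t s where "t < k" "(t,s) \<noteq> (0,\<sigma>)" "(t,s) \<noteq> (k-1,\<mu>)" "\<epsilon> t s = FZ"
proof -
  have s: "l = k" "\<epsilon> 0 \<sigma> = cs b" "\<epsilon> (k-1) \<mu> = cs (\<not> b)"
    "\<And>t s. t < k \<Longrightarrow> (t,s) \<noteq> (0,\<sigma>) \<Longrightarrow> (t,s) \<noteq> (k-1,\<mu>) \<Longrightarrow> \<epsilon> t s = FZ \<or> \<epsilon> t s = FI"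
    using dq by (auto simp: dressed_q_def)
  obtain t s where ts: "\<epsilon> t s \<noteq> q_label k \<sigma> b \<mu> t s" using ne by (metis ext)
  have tk: "t < k"
  proof (rule ccontr)
    assume "\<not> t < k"
    then have "\<epsilon> t s = FI" "q_label k \<sigma> b \<mu> t s = FI"
      using vl s(1) k2 by (auto simp: valid_label_def q_label_def)
    then show False using ts by simp
  qed
  have n0: "(t,s) \<noteq> (0,\<sigma>)" using ts s(2) by (auto simp: q_label_def)
  have n1: "(t,s) \<noteq> (k-1,\<mu>)" using ts s(3) k2 by (auto simp: q_label_def)
  have "q_label k \<sigma> b \<mu> t s = FI" using n0 n1 by (auto simp: q_label_def)
  then have "\<epsilon> t s = FZ" using s(4)[OF tk n0 n1] ts by auto
  with tk n0 n1 show thesis by (rule that)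
qed

lemma eq_on_atLeastAtMost_if_Suc:
  assumes "\<And>n. 1 \<le> n \<Longrightarrow> n < L \<Longrightarrow> f n = f (Suc n)" and "i \<in> {1..L}" "i' \<in> {1..L}"
  shows "f i = f i'"
proof -
  have "f n = f 1" if "1 \<le> n" "n \<le> L" for n
    using that(1)
  proof (induction n rule: dec_induct)
    case (step m)
    then show ?case using assms(1)[of m] that(2) by simp
  qed simp
  then show ?thesis using assms(2,3) by (metis atLeastAtMost_iff)
qed

locale q_shift =
  fixes L k :: nat and U :: real and \<sigma> \<mu> :: spin and b :: bool and i :: nat
  assumes k2: "2 \<le> k" and Lk: "2*k+2 \<le> L" and i1: "1 \<le> i" and iL: "i < L"
begin

definition A :: nat where "A = mode L i \<sigma>"
definition B :: nat where "B = mode L (i+k) \<mu>"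
definition C :: nat where "C = mode L (i+k-1) \<mu>"
definition D :: nat where "D = mode L (i+1) \<sigma>"
definition src :: nat where "src = (if b then B else A)"
definition dst :: nat where "dst = (if b then A else B)"
definition M :: "nat set" where "M = window L i (k+1) - {A, B}"
definition bra :: "nat set \<Rightarrow> nat set" where "bra \<eta> = insert dst \<eta>"
definition ket :: "nat set \<Rightarrow> nat set" where "ket \<eta> = insert src \<eta>"

lemma L_pos: "0 < L" using Lk by simp

lemma modes_distinct: "A \<noteq> B" "A \<noteq> C" "A \<noteq> D" "B \<noteq> C" "B \<noteq> D"
proof -
  show "A \<noteq> B" using mod_add_neq[of k L i] k2 Lk by (auto simp: A_def B_def mode_eq_iff)
  have "k - 1 < L" using Lk by linarith
  then show "A \<noteq> C" using mod_add_neq[of "k-1" L i] k2 by (auto simp: A_def C_def mode_eq_iff)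
  show "A \<noteq> D" using mod_add_neq[of 1 L i] k2 Lk by (auto simp: A_def D_def mode_eq_iff)
  have "i + k = (i+k-1) + 1" using k2 by simp
  then show "B \<noteq> C" using mod_add_neq[of 1 L "i+k-1"] k2 Lk by (auto simp: B_def C_def mode_eq_iff)
  have "i + k = (i+1) + (k-1)" using k2 by simp
  then show "B \<noteq> D" using mod_add_neq[of "k-1" L "i+1"] k2 Lk by (auto simp: B_def D_def mode_eq_iff)
qed

lemma bond_AD: "is_bond L A D" by (auto simp: is_bond_def A_def D_def)

lemma bond_BC: "is_bond L B C"
proof -
  have "i + k = (i+k-1) + 1" using k2 by simp
  then show ?thesis unfolding is_bond_def B_def C_def by (metis insert_commute)
qed

lemma B_notin_window: "B \<notin> window L i k"
proof
  assume "B \<in> window L i k"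
  then obtain t where "t < k" "(i+t) mod L = (i+k) mod L" using mode_in_window by (metis B_def)
  then show False using mod_add_inj[of i t L k] Lk by auto
qed

lemma A_notin_window_Suc: "A \<notin> window L (i+1) k"
proof
  assume "A \<in> window L (i+1) k"
  then obtain t where "t < k" "(i+1+t) mod L = i mod L" using mode_in_window by (metis A_def)
  then show False using mod_add_neq[of "t+1" L i] Lk by (auto simp: add.assoc)
qed

lemma ABCD_in_window: "A \<in> window L i (k+1)" "B \<in> window L i (k+1)" "C \<in> window L i (k+1)" "D \<in> window L i (k+1)"
proof -
  show "A \<in> window L i (k+1)" unfolding window_def A_def by (rule CollectI, rule exI[of _ 0]) auto
  show "B \<in> window L i (k+1)" unfolding window_def B_def by (rule CollectI, rule exI[of _ k]) auto
  show "C \<in> window L i (k+1)" unfolding window_def C_def using k2 by (intro CollectI exI[of _ "k-1"]) auto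
  show "D \<in> window L i (k+1)" unfolding window_def D_def using k2 by (intro CollectI exI[of _ 1]) auto
qed

lemma finite_M: "finite M" and M_subset_modes: "M \<subseteq> modes L"
  using window_subset_modes[OF L_pos] finite_subset[OF window_subset_modes[OF L_pos] finite_modes]
  by (auto simp: M_def)

lemma ABCD_modes: "A \<in> modes L" "B \<in> modes L" "C \<in> modes L" "D \<in> modes L"
  using ABCD_in_window window_subset_modes[OF L_pos] by auto

lemma not_A_and_B_in_window: "l \<le> k \<Longrightarrow> \<not> (A \<in> window L j l \<and> B \<in> window L j l)"
  using window_gap[of L i \<sigma> j l "i+k" \<mu> k] Lk by (auto simp: A_def B_def)

lemma bond_hop_cases:
  assumes lk: "l \<le> k" and XY: "\<And>m. ((m\<in>X) \<noteq> (m\<in>Y)) \<longleftrightarrow> m\<in>{A,B}"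
    and Z: "Z = insert p (Y - {p'})" "p' \<in> Y" "p \<notin> Y" and hp: "is_bond L p p'"
    and supp: "\<And>m. m \<notin> window L j l \<Longrightarrow> (m\<in>X \<longleftrightarrow> m\<in>Z)"
  shows "(Z = flip A (flip D Y) \<and> (A\<in>Y) \<noteq> (D\<in>Y)) \<or> (Z = flip B (flip C Y) \<and> (B\<in>Y) \<noteq> (C\<in>Y))"
proof -
  have pp': "p \<noteq> p'" using Z by auto
  have Wc: "m \<in> window L j l" if "(m \<in> {mode L i \<sigma>, mode L (i+k) \<mu>}) \<noteq> (m \<in> {p,p'})" for m
  proof (rule ccontr)
    assume "m \<notin> window L j l"
    then have "m\<in>X \<longleftrightarrow> m\<in>Z" using supp by blast
    moreover have "(m \<in> {A,B}) \<noteq> (m \<in> {p,p'})" using that by (simp add: A_def B_def)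
    ultimately show False using XY[of m] Z pp' by auto
  qed
  have "{p,p'} = {mode L i \<sigma>, mode L (i+1) \<sigma>} \<or> {p,p'} = {mode L (i+k) \<mu>, mode L (i+k-1) \<mu>}"
    by (rule bond_classification[OF k2 Lk lk hp Wc])
  then have "{p,p'} = {A,D} \<or> {p,p'} = {B,C}" by (simp add: A_def B_def C_def D_def)
  then show ?thesis using Z pp' modes_distinct by (auto simp: doubleton_eq_iff flip_def)
qed

lemma AB_notin_M: "\<eta> \<subseteq> M \<Longrightarrow> A \<notin> \<eta> \<and> B \<notin> \<eta>" by (auto simp: M_def)

lemma bra_ket_differ_iff: "\<eta> \<subseteq> M \<Longrightarrow> ((m \<in> bra \<eta>) \<noteq> (m \<in> ket \<eta>)) \<longleftrightarrow> m \<in> {A,B}"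
  using AB_notin_M[of \<eta>] modes_distinct(1) unfolding bra_def ket_def src_def dst_def by (cases b) auto

lemma bra_ket_modes: "\<eta> \<subseteq> M \<Longrightarrow> bra \<eta> \<subseteq> modes L \<and> ket \<eta> \<subseteq> modes L"
  using M_subset_modes ABCD_modes unfolding bra_def ket_def src_def dst_def by (cases b) auto

lemma basis_elem_bra_ket: assumes lk: "l \<le> k" and eta: "\<eta> \<subseteq> M"
  shows "basis_elem L l j \<epsilon> (bra \<eta>) (ket \<eta>) = 0"
proof (rule ccontr)
  assume nz: "basis_elem L l j \<epsilon> (bra \<eta>) (ket \<eta>) \<noteq> 0"
  have "A \<in> window L j l" using basis_elem_outside_window[OF L_pos nz, of A] bra_ket_differ_iff[OF eta, of A] by auto
  moreover have "B \<in> window L j l" using basis_elem_outside_window[OF L_pos nz, of B] bra_ket_differ_iff[OF eta, of B] by auto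
  ultimately show False using not_A_and_B_in_window[OF lk] by blast
qed

lemma flip_AD_neq_flip_BC: "flip A (flip D Y) \<noteq> flip B (flip C Y)"
proof -
  have "(A \<in> flip A (flip D Y)) \<noteq> (A \<in> flip B (flip C Y))" using modes_distinct by (auto simp: flip_def)
  then show ?thesis by force
qed

lemma basis_elem_hubbard_bra_ket: assumes lk: "l \<le> k" and eta: "\<eta> \<subseteq> M"
  shows "op_mult L (basis_elem L l j \<epsilon>) (hubbard L U) (bra \<eta>) (ket \<eta>) =
    (if (A \<in> ket \<eta>) \<noteq> (D \<in> ket \<eta>) then basis_elem L l j \<epsilon> (bra \<eta>) (flip A (flip D (ket \<eta>))) * hubbard L U (flip A (flip D (ket \<eta>))) (ket \<eta>) else 0)
  + (if (B \<in> ket \<eta>) \<noteq> (C \<in> ket \<eta>) then basis_elem L l j \<epsilon> (bra \<eta>) (flip B (flip C (ket \<eta>))) * hubbard L U (flip B (flip C (ket \<eta>))) (ket \<eta>) else 0)"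
  unfolding op_mult_def
proof (rule sum_two_support[where g = "\<lambda>z. basis_elem L l j \<epsilon> (bra \<eta>) z * hubbard L U z (ket \<eta>)"
    and ?z1.0 = "flip A (flip D (ket \<eta>))" and ?z2.0 = "flip B (flip C (ket \<eta>))"
    and ?c1.0 = "(A \<in> ket \<eta>) \<noteq> (D \<in> ket \<eta>)" and ?c2.0 = "(B \<in> ket \<eta>) \<noteq> (C \<in> ket \<eta>)"])
  show "finite (Pow (modes L))" by simp
  show "flip A (flip D (ket \<eta>)) \<noteq> flip B (flip C (ket \<eta>))" by (rule flip_AD_neq_flip_BC)
  have "flip A (flip D (ket \<eta>)) \<subseteq> modes L" "flip B (flip C (ket \<eta>)) \<subseteq> modes L"
    by (intro flip_subset_modes; use bra_ket_modes[OF eta] ABCD_modes in simp)+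
  then show "flip A (flip D (ket \<eta>)) \<in> Pow (modes L)" "flip B (flip C (ket \<eta>)) \<in> Pow (modes L)" by auto
next
  fix z assume z: "z \<in> Pow (modes L)"
    and nz: "basis_elem L l j \<epsilon> (bra \<eta>) z * hubbard L U z (ket \<eta>) \<noteq> 0"
  have nz1: "basis_elem L l j \<epsilon> (bra \<eta>) z \<noteq> 0" and nz2: "hubbard L U z (ket \<eta>) \<noteq> 0" using nz by auto
  have zy: "z \<noteq> ket \<eta>" using nz1 basis_elem_bra_ket[OF lk eta] by auto
  obtain p q where pq: "is_bond L p q" "q \<in> ket \<eta>" "p \<notin> ket \<eta>" "z = insert p (ket \<eta> - {q})"
    using hubbard_offdiag_nonzero[OF L_pos zy nz2] by blast
  show "(z = flip A (flip D (ket \<eta>)) \<and> (A \<in> ket \<eta>) \<noteq> (D \<in> ket \<eta>)) \<or>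
        (z = flip B (flip C (ket \<eta>)) \<and> (B \<in> ket \<eta>) \<noteq> (C \<in> ket \<eta>))"
    by (rule bond_hop_cases[OF lk bra_ket_differ_iff[OF eta] pq(4,2,3,1) basis_elem_outside_window[OF L_pos nz1]])
qed

lemma hubbard_basis_elem_bra_ket: assumes lk: "l \<le> k" and eta: "\<eta> \<subseteq> M"
  shows "op_mult L (hubbard L U) (basis_elem L l j \<epsilon>) (bra \<eta>) (ket \<eta>) =
    (if (A \<in> bra \<eta>) \<noteq> (D \<in> bra \<eta>) then hubbard L U (bra \<eta>) (flip A (flip D (bra \<eta>))) * basis_elem L l j \<epsilon> (flip A (flip D (bra \<eta>))) (ket \<eta>) else 0)
  + (if (B \<in> bra \<eta>) \<noteq> (C \<in> bra \<eta>) then hubbard L U (bra \<eta>) (flip B (flip C (bra \<eta>))) * basis_elem L l j \<epsilon> (flip B (flip C (bra \<eta>))) (ket \<eta>) else 0)"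
  unfolding op_mult_def
proof (rule sum_two_support[where g = "\<lambda>z. hubbard L U (bra \<eta>) z * basis_elem L l j \<epsilon> z (ket \<eta>)"
    and ?z1.0 = "flip A (flip D (bra \<eta>))" and ?z2.0 = "flip B (flip C (bra \<eta>))"
    and ?c1.0 = "(A \<in> bra \<eta>) \<noteq> (D \<in> bra \<eta>)" and ?c2.0 = "(B \<in> bra \<eta>) \<noteq> (C \<in> bra \<eta>)"])
  show "finite (Pow (modes L))" by simp
  show "flip A (flip D (bra \<eta>)) \<noteq> flip B (flip C (bra \<eta>))" by (rule flip_AD_neq_flip_BC)
  have "flip A (flip D (bra \<eta>)) \<subseteq> modes L" "flip B (flip C (bra \<eta>)) \<subseteq> modes L"
    by (intro flip_subset_modes; use bra_ket_modes[OF eta] ABCD_modes in simp)+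
  then show "flip A (flip D (bra \<eta>)) \<in> Pow (modes L)" "flip B (flip C (bra \<eta>)) \<in> Pow (modes L)" by auto
next
  fix z assume z: "z \<in> Pow (modes L)"
    and nz: "hubbard L U (bra \<eta>) z * basis_elem L l j \<epsilon> z (ket \<eta>) \<noteq> 0"
  have nz1: "basis_elem L l j \<epsilon> z (ket \<eta>) \<noteq> 0" and nz2: "hubbard L U (bra \<eta>) z \<noteq> 0" using nz by auto
  have zx: "bra \<eta> \<noteq> z" using nz1 basis_elem_bra_ket[OF lk eta] by auto
  obtain p q where pq: "is_bond L p q" "z \<subseteq> modes L" "q \<in> z" "p \<notin> z" "bra \<eta> = insert p (z - {q})"
    using hubbard_offdiag_nonzero[OF L_pos zx nz2] by blast
  have pq2: "z = insert q (bra \<eta> - {p})" "p \<in> bra \<eta>" "q \<notin> bra \<eta>" using pq by auto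
  have XY': "((m \<in> ket \<eta>) \<noteq> (m \<in> bra \<eta>)) \<longleftrightarrow> m \<in> {A,B}" for m using bra_ket_differ_iff[OF eta, of m] by auto
  show "(z = flip A (flip D (bra \<eta>)) \<and> (A \<in> bra \<eta>) \<noteq> (D \<in> bra \<eta>)) \<or>
        (z = flip B (flip C (bra \<eta>)) \<and> (B \<in> bra \<eta>) \<noteq> (C \<in> bra \<eta>))"
    by (rule bond_hop_cases[OF lk XY' pq2 is_bond_sym[OF pq(1)]]) (use basis_elem_outside_window[OF L_pos nz1] in blast)
qed

lemma commutator_bra_ket:
  assumes "l \<le> k" and "\<eta> \<subseteq> M"
  shows "op_mult L (basis_elem L l j \<epsilon>) (hubbard L U) (bra \<eta>) (ket \<eta>)
       - op_mult L (hubbard L U) (basis_elem L l j \<epsilon>) (bra \<eta>) (ket \<eta>)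
     = bond_commutator (basis_elem L l j \<epsilon>) (hubbard L U) A D (bra \<eta>) (ket \<eta>)
     + bond_commutator (basis_elem L l j \<epsilon>) (hubbard L U) B C (bra \<eta>) (ket \<eta>)"
  unfolding basis_elem_hubbard_bra_ket[OF assms] hubbard_basis_elem_bra_ket[OF assms] bond_commutator_def
  by simp

definition kappa :: complex where "kappa = (if b then -2 else 2) * order_sign \<sigma> \<mu> b"

lemma src_dst_notin: "\<eta> \<subseteq> M \<Longrightarrow> src \<notin> \<eta> \<and> dst \<notin> \<eta>"
  using AB_notin_M[of \<eta>] unfolding src_def dst_def by (cases b) auto

lemma insert_src_dst_modes: "\<eta> \<subseteq> M \<Longrightarrow> e' \<in> modes L \<Longrightarrow> insert src (insert dst (insert e' \<eta>)) \<subseteq> modes L"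
  using M_subset_modes ABCD_modes unfolding src_def dst_def by (cases b) auto

text \<open>The bond \<open>{B, C}\<close> sees the dressed \<open>q\<close>'s at \<open>i\<close>, the bond \<open>{A, D}\<close> those at \<open>i + 1\<close>, with
  opposite signs.\<close>
lemma signed_commutator_bra_ket:
  assumes lk: "l \<le> k" and eta: "\<eta> \<subseteq> M"
  shows "hop_sign dst src (ket \<eta>) * (op_mult L (basis_elem L l j \<epsilon>) (hubbard L U) (bra \<eta>) (ket \<eta>)
           - op_mult L (hubbard L U) (basis_elem L l j \<epsilon>) (bra \<eta>) (ket \<eta>))
   = (if dressed_q L k \<sigma> \<mu> b i l j \<epsilon> then kappa * z_sign (factor_list L k j \<epsilon>) \<eta> else 0)
   - (if dressed_q L k \<sigma> \<mu> b (i+1) l j \<epsilon> then kappa * z_sign (factor_list L k j \<epsilon>) \<eta> else 0)"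
proof -
  have nin: "src \<notin> \<eta>" "dst \<notin> \<eta>" using src_dst_notin[OF eta] by auto
  have B_end: "(B = src \<and> A = dst) \<or> (B = dst \<and> A = src)" unfolding src_def dst_def by (cases b) auto
  have A_end: "(A = src \<and> B = dst) \<or> (A = dst \<and> B = src)" unfolding src_def dst_def by (cases b) auto
  have b_BC: "b \<longleftrightarrow> A = (if B = src then dst else C)"
    using modes_distinct unfolding src_def dst_def by (cases b) auto
  have b_AD: "b \<longleftrightarrow> D = (if A = src then dst else D)"
    using modes_distinct unfolding src_def dst_def by (cases b) auto
  have B_alt: "B = mode L (i+1+k-1) \<mu>" using k2 by (simp add: B_def)
  have ends_AC: "(A = A \<and> C = C) \<or> (A = C \<and> C = A)" and ends_DB: "(B = D \<and> D = B) \<or> (B = B \<and> D = D)"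
    by simp_all
  have B_out: "B \<notin> {A, C}" and A_out: "A \<notin> {D, B}" and DB: "D \<noteq> B" using modes_distinct by auto
  have kappa_BC: "(if B = src then -2 else 2) * order_sign \<sigma> \<mu> b = kappa"
    and kappa_AD: "(if A = src then -2 else 2) * order_sign \<sigma> \<mu> b = - kappa"
    unfolding kappa_def src_def using modes_distinct by (cases b; auto)+
  have BC: "hop_sign dst src (ket \<eta>) * bond_commutator (basis_elem L l j \<epsilon>) (hubbard L U) B C (bra \<eta>) (ket \<eta>)
      = (if dressed_q L k \<sigma> \<mu> b i l j \<epsilon> then kappa * z_sign (factor_list L k j \<epsilon>) \<eta> else 0)"
    using bond_commutator_term[OF k2 Lk lk A_def C_def ends_AC B_end modes_distinct(2) B_out bond_BC
        B_notin_window b_BC nin insert_src_dst_modes[OF eta ABCD_modes(3)]]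
    unfolding bra_def ket_def kappa_BC by simp
  have AD: "hop_sign dst src (ket \<eta>) * bond_commutator (basis_elem L l j \<epsilon>) (hubbard L U) A D (bra \<eta>) (ket \<eta>)
      = - (if dressed_q L k \<sigma> \<mu> b (i+1) l j \<epsilon> then kappa * z_sign (factor_list L k j \<epsilon>) \<eta> else 0)"
    using bond_commutator_term[OF k2 Lk lk D_def B_alt ends_DB A_end DB A_out bond_AD
        A_notin_window_Suc b_AD nin insert_src_dst_modes[OF eta ABCD_modes(4)]]
    unfolding bra_def ket_def kappa_AD by simp
  show ?thesis
    unfolding commutator_bra_ket[OF lk eta] distrib_left BC AD by simp
qed

abbreviation q :: "nat \<Rightarrow> spin \<Rightarrow> fop" where "q \<equiv> q_label k \<sigma> b \<mu>"

text \<open>Summing over \<open>\<eta>\<close> kills every dressed \<open>q\<close> other than \<open>q\<close> itself: a \<open>z\<close> inside the window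
  makes the summand odd under flipping the occupation of its mode.\<close>
lemma sum_z_sign_dressed:
  assumes dq: "dressed_q L k \<sigma> \<mu> b n l j \<epsilon>" and n: "n = i \<or> n = i + 1" and vl: "valid_label l \<epsilon>"
  shows "(\<Sum>\<eta>\<in>Pow M. z_sign (factor_list L k j \<epsilon>) \<eta>) = (if \<epsilon> = q then of_nat (card (Pow M)) else 0)"
proof (cases "\<epsilon> = q")
  case True
  have "z_sign (factor_list L k j \<epsilon>) \<eta> = 1" for \<eta>
    by (rule z_sign_no_FZ) (use True q_label_ne_FZ in \<open>auto simp: factor_list_def\<close>)
  then show ?thesis using True by simp
next
  case False
  obtain t s where ts: "t < k" "(t,s) \<noteq> (0,\<sigma>)" "(t,s) \<noteq> (k-1,\<mu>)" "\<epsilon> t s = FZ"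
    using dressed_q_other_has_FZ[OF k2 dq vl False] .
  have jn: "j mod L = n mod L" using dq by (simp add: dressed_q_def)
  note pos = window_mode_positions[OF Lk k2 jn ts(1)]
  define m0 where "m0 = mode L (j+t) s"
  have mem: "(FZ, m0) \<in> set (factor_list L k j \<epsilon>)"
    using factor_list_mem[OF ts(1), of \<epsilon> s L j] ts(4) by (simp add: m0_def)
  have "m0 \<in> M"
    using n
  proof
    assume "n = i"
    then have "m0 \<in> window L i k" "m0 \<noteq> A" using pos(1)[of s \<sigma>] pos(3)[of s] ts(2) by (auto simp: m0_def A_def)
    then show ?thesis using B_notin_window window_subset_Suc by (auto simp: M_def)
  next
    assume "n = i + 1"
    then have "m0 \<in> window L (i+1) k" "m0 \<noteq> B"
      using pos(2)[of s \<mu>] pos(3)[of s] ts(3) k2 by (auto simp: m0_def B_def)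
    then show ?thesis using A_notin_window_Suc window_Suc_subset by (auto simp: M_def)
  qed
  then have "(\<Sum>\<eta>\<in>Pow M. z_sign (factor_list L k j \<epsilon>) \<eta>) = 0"
    by (rule sum_Pow_flip_odd[OF _ finite_M]) (rule z_sign_flip[OF distinct_factor_list_modes mem], use Lk in simp)
  then show ?thesis using False by simp
qed

lemma dressed_term_sum:
  assumes n: "n = i \<or> n = i + 1" and j: "j \<in> {1..L}" and vl: "valid_label l \<epsilon>"
  shows "(if dressed_q L k \<sigma> \<mu> b n l j \<epsilon> then kappa * (\<Sum>\<eta>\<in>Pow M. z_sign (factor_list L k j \<epsilon>) \<eta>) else 0)
       = (if (l, j, \<epsilon>) = (k, n, q) then kappa * of_nat (card (Pow M)) else 0)"
proof (cases "dressed_q L k \<sigma> \<mu> b n l j \<epsilon>")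
  case True
  have "n \<in> {1..L}" using n i1 iL by auto
  then have "l = k" "j = n" using True site_eq_if_mod_eq[of j L n] j by (auto simp: dressed_q_def)
  then show ?thesis using True sum_z_sign_dressed[OF True n vl] by auto
next
  case False
  then have "(l, j, \<epsilon>) \<noteq> (k, n, q)" using q_label_dressed[OF k2, of n L n] by auto
  then show ?thesis using False by auto
qed

definition commutator_functional :: "op \<Rightarrow> complex" where
  "commutator_functional P = (\<Sum>\<eta>\<in>Pow M. hop_sign dst src (ket \<eta>) *
     (op_mult L P (hubbard L U) (bra \<eta>) (ket \<eta>) - op_mult L (hubbard L U) P (bra \<eta>) (ket \<eta>)))"

lemma commutator_functional_op_sum:
  "commutator_functional (op_sum f I) = (\<Sum>\<iota>\<in>I. commutator_functional (f \<iota>))"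
  unfolding commutator_functional_def op_mult_sum_left op_mult_sum_right
  by (simp add: sum_subtractf[symmetric] sum_distrib_left sum.swap[of _ "Pow M"] algebra_simps)

lemma commutator_functional_op_smult:
  "commutator_functional (op_smult c P) = c * commutator_functional P"
  unfolding commutator_functional_def op_mult_smult_left op_mult_smult_right
  by (simp add: sum_distrib_left algebra_simps)

lemma commutator_functional_basis_elem:
  assumes "(l, j, \<epsilon>) \<in> local_index L k"
  shows "commutator_functional (basis_elem L l j \<epsilon>)
    = (if (l, j, \<epsilon>) = (k, i, q) then kappa * of_nat (card (Pow M)) else 0)
    - (if (l, j, \<epsilon>) = (k, i+1, q) then kappa * of_nat (card (Pow M)) else 0)"
proof -
  have lk: "l \<le> k" and j: "j \<in> {1..L}" and vl: "valid_label l \<epsilon>"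
    using assms by (auto simp: local_index_def)
  define z where "z \<eta> = z_sign (factor_list L k j \<epsilon>) \<eta>" for \<eta>
  have "commutator_functional (basis_elem L l j \<epsilon>)
      = (\<Sum>\<eta>\<in>Pow M. (if dressed_q L k \<sigma> \<mu> b i l j \<epsilon> then kappa * z \<eta> else 0)
                    - (if dressed_q L k \<sigma> \<mu> b (i+1) l j \<epsilon> then kappa * z \<eta> else 0))"
    unfolding commutator_functional_def
    by (rule sum.cong[OF refl]) (use signed_commutator_bra_ket[OF lk] in \<open>auto simp: z_def\<close>)
  also have "\<dots> = (if dressed_q L k \<sigma> \<mu> b i l j \<epsilon> then kappa * (\<Sum>\<eta>\<in>Pow M. z \<eta>) else 0)
                 - (if dressed_q L k \<sigma> \<mu> b (i+1) l j \<epsilon> then kappa * (\<Sum>\<eta>\<in>Pow M. z \<eta>) else 0)"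
    by (simp add: sum_subtractf sum_distrib_left)
  also have "\<dots> = (if (l, j, \<epsilon>) = (k, i, q) then kappa * of_nat (card (Pow M)) else 0)
                 - (if (l, j, \<epsilon>) = (k, i+1, q) then kappa * of_nat (card (Pow M)) else 0)"
    unfolding z_def using dressed_term_sum[OF _ j vl] by simp
  finally show ?thesis .
qed

lemma kappa_card_nonzero: "kappa * of_nat (card (Pow M)) \<noteq> 0"
  using finite_M by (auto simp: kappa_def order_sign_def card_Pow)

lemma coef_q_Suc:
  assumes "is_conserved_local L U k coef"
  shows "coef k i q = coef k (i+1) q"
proof -
  let ?K = "kappa * of_nat (card (Pow M))"
  have q_index: "(k, n, q) \<in> local_index L k" if "n \<in> {1..L}" for n
    using k2 that by (cases \<sigma>; cases \<mu>) (auto simp: local_index_def valid_label_def q_label_def cs_def)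
  have "0 = commutator_functional (local_op L k coef)"
    using assms by (simp add: commutator_functional_def is_conserved_local_def)
  also have "\<dots> = (\<Sum>\<iota>\<in>local_index L k. (if \<iota> = (k, i, q) then coef k i q * ?K else 0)
                                       - (if \<iota> = (k, i+1, q) then coef k (i+1) q * ?K else 0))"
    unfolding local_op_local_index commutator_functional_op_sum
    by (intro sum.cong refl)
       (clarsimp simp: split_paired_all commutator_functional_op_smult commutator_functional_basis_elem)
  also have "\<dots> = coef k i q * ?K - coef k (i+1) q * ?K"
    using q_index i1 iL by (simp add: sum_subtractf finite_local_index)
  finally show ?thesis using kappa_card_nonzero by (simp add: right_diff_distrib[symmetric])
qed

end

theorem lemma5:
  fixes L k :: nat and U :: real
    and coef :: "nat \<Rightarrow> nat \<Rightarrow> (nat \<Rightarrow> spin \<Rightarrow> fop) \<Rightarrow> complex"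
  assumes "U \<noteq> 0" and "2 \<le> k" and "k < L div 2"
    and "is_conserved_local L U k coef"
  shows "\<forall>\<sigma> \<mu> b. \<forall>i\<in>{1..L}. \<forall>i'\<in>{1..L}.
           coef k i (q_label k \<sigma> b \<mu>) = coef k i' (q_label k \<sigma> b \<mu>)"
proof (intro allI ballI)
  fix \<sigma> \<mu> b i i' assume "i \<in> {1..L}" "i' \<in> {1..L}"
  moreover have "coef k n (q_label k \<sigma> b \<mu>) = coef k (Suc n) (q_label k \<sigma> b \<mu>)" if "1 \<le> n" "n < L" for n
  proof -
    interpret q_shift L k U \<sigma> \<mu> b n
      using assms(2,3) that by unfold_locales auto
    show ?thesis using coef_q_Suc[OF assms(4)] by simp
  qed
  ultimately show "coef k i (q_label k \<sigma> b \<mu>) = coef k i' (q_label k \<sigma> b \<mu>)"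
    using eq_on_atLeastAtMost_if_Suc[where f = "\<lambda>n. coef k n (q_label k \<sigma> b \<mu>)"] by blast
qed

end
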